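(* Let $k$ be a field of characteristic zero and let $A=\bigoplus_{i\ge 0}A_i$ be a standard graded Artinian $k$-algebra. Then $A$ has the weak Lefschetz property (respectively, the strong Lefschetz property) if and only if there exists a linear form $l\in A_1$ such that the associated graded ring $Gr_{l}(A)$ has the weak Lefschetz property (respectively, the strong Lefschetz property).
   Context: For a linear form $l\in A_1$, let $r$ be the least integer with $l^r=0$. The associated graded ring of $A$ with respect to $l$ is $Gr_l(A)=A/(l)\oplus (l)/(l^2)\oplus\cdots\oplus (l^{r-1})/(l^r)$, with multiplication induced from $A$ and with the grading inherited from the grading of $A$. A finite graded module $M=\bigoplus_i M_i$ over a standard graded $k$-algebra $R$ (in particular $R$ itself) has the weak Lefschetz property (WLP) if there is a linear form $\ell\in R_1$ such that each multiplication map $\times\ell\colon M_i\to M_{i+1}$ has maximal rank (is injective or surjective); it has the strong Lefschetz property (SLP) if there is $\ell\in R_1$ such that $\times\ell^d\colon M_i\to M_{i+d}$ has maximal rank for all $d>0$ and all $i$. *)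

theory Defs
  imports Main "HOL.Vector_Spaces"
begin

text \<open>A k-algebra A is modelled by a type 'a of class comm_ring_1 together with a
  k-vector-space structure scale (k a type of class field) compatible with the
  multiplication.\<close>

definition ring_ideal :: "'a::comm_ring_1 set \<Rightarrow> bool" where
  "ring_ideal I \<longleftrightarrow> 0 \<in> I \<and> (\<forall>x\<in>I. \<forall>y\<in>I. x + y \<in> I) \<and> (\<forall>x\<in>I. \<forall>r. r * x \<in> I)"

definition artinian_ring :: "'a::comm_ring_1 itself \<Rightarrow> bool" where
  "artinian_ring _ \<longleftrightarrow>
     \<not> (\<exists>f :: nat \<Rightarrow> 'a set. \<forall>n. ring_ideal (f n) \<and> f (Suc n) \<subset> f n)"

definition k_algebra :: "('k::field \<Rightarrow> 'a::comm_ring_1 \<Rightarrow> 'a) \<Rightarrow> bool" where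
  "k_algebra scale \<longleftrightarrow> vector_space scale \<and> (\<forall>c x y. scale c (x * y) = scale c x * y)"

definition standard_graded_algebra ::
    "('k::field \<Rightarrow> 'a::comm_ring_1 \<Rightarrow> 'a) \<Rightarrow> (nat \<Rightarrow> 'a set) \<Rightarrow> bool" where
  "standard_graded_algebra scale A \<longleftrightarrow>
     k_algebra scale \<and> (1::'a) \<noteq> 0 \<and>
     (\<forall>i. module.subspace scale (A i)) \<and>
     (\<forall>x. \<exists>!c :: nat \<Rightarrow> 'a. (\<forall>i. c i \<in> A i) \<and> finite {i. c i \<noteq> 0} \<and>
            x = (\<Sum>i\<in>{i. c i \<noteq> 0}. c i)) \<and>
     (\<forall>i j. \<forall>x\<in>A i. \<forall>y\<in>A j. x * y \<in> A (i + j)) \<and>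
     A 0 = range (\<lambda>c. scale c 1) \<and>
     (\<exists>B. finite B \<and> module.span scale B = A 1) \<and>
     (\<forall>i. A (Suc i) = module.span scale {x * y | x y. x \<in> A 1 \<and> y \<in> A i})"

definition standard_graded_artinian_algebra ::
    "('k::field \<Rightarrow> 'a::comm_ring_1 \<Rightarrow> 'a) \<Rightarrow> (nat \<Rightarrow> 'a set) \<Rightarrow> bool" where
  "standard_graded_artinian_algebra scale A \<longleftrightarrow>
     standard_graded_algebra scale A \<and> artinian_ring TYPE('a)"

text \<open>A graded object is given by its graded pieces R i and its multiplication mult.\<close>

definition maximal_rank :: "('b \<Rightarrow> 'b) \<Rightarrow> 'b set \<Rightarrow> 'b set \<Rightarrow> bool" where
  "maximal_rank f S T \<longleftrightarrow> inj_on f S \<or> f ` S = T"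

definition WLP :: "(nat \<Rightarrow> 'b set) \<Rightarrow> ('b \<Rightarrow> 'b \<Rightarrow> 'b) \<Rightarrow> bool" where
  "WLP R mult \<longleftrightarrow> (\<exists>l\<in>R 1. \<forall>i. maximal_rank (mult l) (R i) (R (Suc i)))"

text \<open>Multiplication by l^d is the d-fold iterate of multiplication by l.\<close>
definition SLP :: "(nat \<Rightarrow> 'b set) \<Rightarrow> ('b \<Rightarrow> 'b \<Rightarrow> 'b) \<Rightarrow> bool" where
  "SLP R mult \<longleftrightarrow> (\<exists>l\<in>R 1. \<forall>d>0. \<forall>i. maximal_rank (mult l ^^ d) (R i) (R (i + d)))"

definition pideal :: "'a::comm_ring_1 \<Rightarrow> 'a set" where
  "pideal a = range (\<lambda>x. a * x)"

definition coset :: "'a::comm_ring_1 set \<Rightarrow> 'a \<Rightarrow> 'a set" where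
  "coset I x = (\<lambda>y. x + y) ` I"

text \<open>An element of Gr_l(A) = (+)_j (l^j)/(l^(j+1)) is represented canonically as the
  function j \<mapsto> (its component in (l^j)/(l^(j+1)), a coset of (l^(j+1))). Components for
  j \<ge> r (where l^r = 0) are the zero coset {0}.\<close>

definition gr_piece :: "(nat \<Rightarrow> 'a::comm_ring_1 set) \<Rightarrow> 'a \<Rightarrow> nat \<Rightarrow> nat \<Rightarrow> 'a set set" where
  "gr_piece A l j d = {coset (pideal (l ^ Suc j)) x | x. x \<in> pideal (l ^ j) \<and> x \<in> A d}"

definition gr_grade :: "(nat \<Rightarrow> 'a::comm_ring_1 set) \<Rightarrow> 'a \<Rightarrow> nat \<Rightarrow> (nat \<Rightarrow> 'a set) set" where
  "gr_grade A l d = {g. \<forall>j. g j \<in> gr_piece A l j d}"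

definition gr_rep :: "'a set \<Rightarrow> 'a" where
  "gr_rep S = (SOME x. x \<in> S)"

definition gr_mult :: "'a::comm_ring_1 \<Rightarrow> (nat \<Rightarrow> 'a set) \<Rightarrow> (nat \<Rightarrow> 'a set) \<Rightarrow> (nat \<Rightarrow> 'a set)" where
  "gr_mult l g h = (\<lambda>j. coset (pideal (l ^ Suc j))
        (\<Sum>a\<le>j. gr_rep (g a) * gr_rep (h (j - a))))"

end

(* For l = 0 the associated graded ring Gr_0(A) is A itself, which gives the forward implications.

   Conversely, let L in Gr_l(A)_1 have components represented by x_e in (l^e) of degree 1 and put
   u_t = sum_e t^(-e) x_e in A_1.  Choose bases of the A_i adapted to the l-adic filtration.  After
   rescaling every basis vector p by t^(ord_l p), the matrix of multiplication by u_t^d becomes a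
   polynomial matrix in t whose value at t = 0 is the matrix of multiplication by L^d on Gr_l(A).
   A one-sided inverse of the value at 0 yields a square polynomial matrix with value 1 at 0, hence
   invertible outside the finitely many roots of its determinant; so maximal rank of L^d passes to
   u_t^d for all but finitely many t.  As A is Artinian only finitely many degrees matter, and as k
   is infinite some u_t is a Lefschetz element of A. *)

theory Submission
  imports Defs "HOL-Library.Function_Algebras" "Jordan_Normal_Form.Determinant"
begin

lemma sum_convolution_assoc:
  fixes x y r :: "nat \<Rightarrow> 'a::comm_semiring_1"
  shows "(\<Sum>a\<le>j. x a * (\<Sum>e\<le>j - a. y e * r (j - a - e)))
       = (\<Sum>f\<le>j. (\<Sum>a\<le>f. x a * y (f - a)) * r (j - f))"
proof -
  define g where "g a e = x a * y e * r (j - (a + e))" for a e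
  have "(\<Sum>a\<le>j. x a * (\<Sum>e\<le>j - a. y e * r (j - a - e))) = (\<Sum>a\<le>j. \<Sum>e\<le>j - a. g a e)"
    unfolding g_def sum_distrib_left by (simp add: mult.assoc diff_diff_left)
  also have "\<dots> = (\<Sum>(a, e)\<in>Sigma {..j} (\<lambda>a. {..j - a}). g a e)"
    by (rule sum.Sigma) auto
  also have "Sigma {..j} (\<lambda>a. {..j - a}) = {(a, e). a + e \<le> j}" by auto
  also have "(\<Sum>(a, e)\<in>{(a, e). a + e \<le> j}. g a e) = (\<Sum>f\<le>j. \<Sum>a\<le>f. g a (f - a))"
    by (rule sum.triangle_reindex_eq)
  also have "\<dots> = (\<Sum>f\<le>j. (\<Sum>a\<le>f. x a * y (f - a)) * r (j - f))"
    unfolding sum_distrib_right g_def by (intro sum.cong refl) (simp add: mult.assoc)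
  finally show ?thesis .
qed

lemma times_funpow: "(*) (c::'a::monoid_mult) ^^ d = (*) (c ^ d)"
  using funpow_times_power[of "\<lambda>_. d" c] .

lemma funpow_conj: "(\<And>x. g (h x) = h (f x)) \<Longrightarrow> (g ^^ n) (h x) = h ((f ^^ n) x)"
  by (induction n) simp_all

lemma maximal_rank_image:
  assumes h: "inj h" and gh: "\<And>x. g (h x) = h (f x)" and mr: "maximal_rank f S T"
  shows "maximal_rank g (h ` S) (h ` T)"
proof (cases "inj_on f S")
  case True
  have "inj_on g (h ` S)"
  proof (rule inj_onI)
    fix u v assume "u \<in> h ` S" "v \<in> h ` S" "g u = g v"
    then obtain x y where xy: "x \<in> S" "y \<in> S" "u = h x" "v = h y" "h (f x) = h (f y)"
      using gh by auto
    hence "f x = f y" using h by (simp add: inj_eq)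
    thus "u = v" using True xy by (simp add: inj_on_eq_iff)
  qed
  thus ?thesis by (simp add: maximal_rank_def)
next
  case False
  hence "f ` S = T" using mr unfolding maximal_rank_def by blast
  moreover have "g ` h ` S = h ` f ` S" by (simp add: image_image gh)
  ultimately show ?thesis by (simp add: maximal_rank_def)
qed

section \<open>Generic rank of polynomial matrices\<close>

definition mat_injective :: "'p set \<Rightarrow> 'q set \<Rightarrow> ('q \<Rightarrow> 'p \<Rightarrow> 'k::field) \<Rightarrow> bool" where
  "mat_injective P Q M \<longleftrightarrow> (\<forall>z. (\<forall>q\<in>Q. (\<Sum>p\<in>P. M q p * z p) = 0) \<longrightarrow> (\<forall>p\<in>P. z p = 0))"

definition mat_surjective :: "'p set \<Rightarrow> 'q set \<Rightarrow> ('q \<Rightarrow> 'p \<Rightarrow> 'k::field) \<Rightarrow> bool" where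
  "mat_surjective P Q M \<longleftrightarrow> (\<forall>y. \<exists>z. \<forall>q\<in>Q. (\<Sum>p\<in>P. M q p * z p) = y q)"

lemma det_map_poly_eval: "det (map_mat (\<lambda>p. poly p t) M) = poly (det M) (t::'k::field)"
proof -
  interpret comm_ring_hom "\<lambda>p. poly p t" by unfold_locales auto
  show ?thesis by (rule hom_det)
qed

lemma mult_mat_vec_enum:
  assumes en: "bij_betw en {..<n} P" and i: "i < n"
  shows "(mat n n (\<lambda>(i, j). M (en i) (en j)) *\<^sub>v vec n (\<lambda>j. z (en j))) $ i = (\<Sum>p\<in>P. M (en i) p * z p)"
  using i sum.reindex_bij_betw[OF en, of "\<lambda>p. M (en i) p * z p"]
  by (simp add: mult_mat_vec_def scalar_prod_def lessThan_atLeast0)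

lemma mat_injective_if_det_nonzero:
  fixes M :: "'p \<Rightarrow> 'p \<Rightarrow> 'k::field"
  assumes en: "bij_betw en {..<n} P" and det: "det (mat n n (\<lambda>(i, j). M (en i) (en j))) \<noteq> 0"
  shows "mat_injective P P M"
  unfolding mat_injective_def
proof (intro allI impI ballI)
  fix z p assume z: "\<forall>p\<in>P. (\<Sum>p'\<in>P. M p p' * z p') = 0" and p: "p \<in> P"
  let ?K = "mat n n (\<lambda>(i, j). M (en i) (en j))"
  have K: "?K \<in> carrier_mat n n" by simp
  have "?K *\<^sub>v vec n (\<lambda>j. z (en j)) = 0\<^sub>v n"
  proof (rule eq_vecI)
    fix i assume "i < dim_vec (0\<^sub>v n :: 'k vec)"
    hence i: "i < n" by simp
    show "(?K *\<^sub>v vec n (\<lambda>j. z (en j))) $ i = 0\<^sub>v n $ i"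
      unfolding mult_mat_vec_enum[OF en i] using z bij_betw_apply[OF en] i by simp
  qed simp
  hence "vec n (\<lambda>j. z (en j)) = 0\<^sub>v n"
    using det_0_iff_vec_prod_zero_field[OF K] det by (meson vec_carrier)
  moreover have "inv_into {..<n} en p < n" "en (inv_into {..<n} en p) = p"
    using bij_betw_apply[OF bij_betw_inv_into[OF en] p] bij_betw_inv_into_right[OF en p] by auto
  ultimately show "z p = 0" by (metis index_vec index_zero_vec(1))
qed

lemma mat_surjective_if_det_nonzero:
  fixes M :: "'p \<Rightarrow> 'p \<Rightarrow> 'k::field"
  assumes en: "bij_betw en {..<n} P" and det: "det (mat n n (\<lambda>(i, j). M (en i) (en j))) \<noteq> 0"
  shows "mat_surjective P P M"
  unfolding mat_surjective_def
proof
  fix y :: "'p \<Rightarrow> 'k"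
  let ?K = "mat n n (\<lambda>(i, j). M (en i) (en j))"
  let ?ix = "inv_into {..<n} en"
  have K: "?K \<in> carrier_mat n n" by simp
  obtain B where B: "B \<in> carrier_mat n n" "?K * B = 1\<^sub>m n"
    using det_non_zero_imp_unit[OF K det, of "()"] unfolding Units_def ring_mat_def by auto
  define w where "w = B *\<^sub>v vec n (\<lambda>j. y (en j))"
  have "?K *\<^sub>v w = (?K * B) *\<^sub>v vec n (\<lambda>j. y (en j))"
    unfolding w_def by (rule assoc_mult_mat_vec[symmetric, OF K B(1)]) simp
  hence Kw: "?K *\<^sub>v w = vec n (\<lambda>j. y (en j))" using B(2) by simp
  have w: "w = vec n (\<lambda>j. w $ ?ix (en j))"
    using B(1) bij_betw_inv_into_left[OF en] by (intro eq_vecI) (simp_all add: w_def)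
  show "\<exists>z. \<forall>p\<in>P. (\<Sum>p'\<in>P. M p p' * z p') = y p"
  proof (intro exI ballI)
    fix p assume p: "p \<in> P"
    have ix: "?ix p < n" "en (?ix p) = p"
      using bij_betw_apply[OF bij_betw_inv_into[OF en] p] bij_betw_inv_into_right[OF en p] by auto
    have "(?K *\<^sub>v w) $ ?ix p = y p" using Kw ix by simp
    thus "(\<Sum>p'\<in>P. M p p' * w $ ?ix p') = y p"
      using mult_mat_vec_enum[OF en ix(1), of M "\<lambda>p'. w $ ?ix p'"] w ix by simp
  qed
qed

lemma poly_mat_generically_bijective:
  fixes E :: "'p \<Rightarrow> 'p \<Rightarrow> 'k::field poly"
  assumes P: "finite P"
    and E0: "\<And>p p'. p \<in> P \<Longrightarrow> p' \<in> P \<Longrightarrow> poly (E p p') 0 = (if p = p' then 1 else 0)"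
  shows "\<exists>S. finite S \<and> (\<forall>t. t \<notin> S \<longrightarrow>
           mat_injective P P (\<lambda>p p'. poly (E p p') t) \<and> mat_surjective P P (\<lambda>p p'. poly (E p p') t))"
proof -
  obtain en where en: "bij_betw en {..<card P} P"
    using P ex_bij_betw_nat_finite lessThan_atLeast0 by metis
  define n where "n = card P"
  define D where "D = det (mat n n (\<lambda>(i, j). E (en i) (en j)))"
  have det_eval: "det (mat n n (\<lambda>(i, j). poly (E (en i) (en j)) t)) = poly D t" for t
  proof -
    have "mat n n (\<lambda>(i, j). poly (E (en i) (en j)) t) = map_mat (\<lambda>p. poly p t) (mat n n (\<lambda>(i, j). E (en i) (en j)))"
      by (intro eq_matI) auto
    thus ?thesis unfolding D_def by (simp add: det_map_poly_eval)
  qed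
  have "inj_on en {..<n}" using en unfolding n_def bij_betw_def by simp
  hence "mat n n (\<lambda>(i, j). poly (E (en i) (en j)) 0) = 1\<^sub>m n"
    using bij_betw_apply[OF en] unfolding n_def
    by (intro eq_matI) (auto simp: E0 inj_on_eq_iff)
  hence "poly D 0 = 1" using det_eval[of 0] by simp
  hence "finite {t. poly D t = 0}" using poly_roots_finite[of D] by force
  moreover have "mat_injective P P (\<lambda>p p'. poly (E p p') t) \<and> mat_surjective P P (\<lambda>p p'. poly (E p p') t)"
    if "poly D t \<noteq> 0" for t
  proof -
    have "det (mat n n (\<lambda>(i, j). poly (E (en i) (en j)) t)) \<noteq> 0" using that det_eval by simp
    thus ?thesis
      using mat_injective_if_det_nonzero[OF en[folded n_def], where M = "\<lambda>p p'. poly (E p p') t"]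
        mat_surjective_if_det_nonzero[OF en[folded n_def], where M = "\<lambda>p p'. poly (E p p') t"]
      by simp
  qed
  ultimately show ?thesis by (intro exI[of _ "{t. poly D t = 0}"]) simp
qed

lemma poly_mat_generically_surjective:
  fixes N :: "'q \<Rightarrow> 'p \<Rightarrow> 'k::field poly"
  assumes P: "finite P" and Q: "finite Q" and N0: "mat_surjective P Q (\<lambda>q p. poly (N q p) 0)"
  shows "\<exists>S. finite S \<and> (\<forall>t. t \<notin> S \<longrightarrow> mat_surjective P Q (\<lambda>q p. poly (N q p) t))"
proof -
  define H where "H p q' = (SOME z. \<forall>q\<in>Q. (\<Sum>p\<in>P. poly (N q p) 0 * z p) = (if q = q' then 1 else 0)) p"
    for p q'
  have H: "\<forall>q\<in>Q. (\<Sum>p\<in>P. poly (N q p) 0 * H p q') = (if q = q' then 1 else 0)" for q'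
    unfolding H_def using someI_ex[OF N0[unfolded mat_surjective_def, rule_format, of "\<lambda>q. if q = q' then 1 else 0"]]
    by simp
  define E where "E q q' = (\<Sum>p\<in>P. smult (H p q') (N q p))" for q q'
  have E: "poly (E q q') t = (\<Sum>p\<in>P. poly (N q p) t * H p q')" for q q' t
    unfolding E_def poly_sum poly_smult by (simp add: mult.commute)
  obtain S where S: "finite S" "\<And>t. t \<notin> S \<Longrightarrow> mat_surjective Q Q (\<lambda>q q'. poly (E q q') t)"
    using poly_mat_generically_bijective[OF Q, of E] H by (auto simp: E)
  have "mat_surjective P Q (\<lambda>q p. poly (N q p) t)" if t: "t \<notin> S" for t
    unfolding mat_surjective_def
  proof
    fix y
    obtain w where w: "\<forall>q\<in>Q. (\<Sum>q'\<in>Q. poly (E q q') t * w q') = y q"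
      using S(2)[OF t] unfolding mat_surjective_def by blast
    have "(\<Sum>p\<in>P. poly (N q p) t * (\<Sum>q'\<in>Q. H p q' * w q')) = (\<Sum>q'\<in>Q. poly (E q q') t * w q')" for q
      unfolding E sum_distrib_left sum_distrib_right mult.assoc by (rule sum.swap)
    thus "\<exists>z. \<forall>q\<in>Q. (\<Sum>p\<in>P. poly (N q p) t * z p) = y q"
      using w by (intro exI[of _ "\<lambda>p. \<Sum>q'\<in>Q. H p q' * w q'"]) simp
  qed
  thus ?thesis using S(1) by blast
qed

lemma sum_fun_apply: "(\<Sum>q\<in>F. f q) x = (\<Sum>q\<in>F. f q x)"
  by (induction F rule: infinite_finite_induct) auto

definition fun_scale :: "'k::field \<Rightarrow> ('q \<Rightarrow> 'k) \<Rightarrow> 'q \<Rightarrow> 'k" where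
  "fun_scale c f = (\<lambda>x. c * f x)"

lemma vector_space_fun_scale: "vector_space (fun_scale :: 'k::field \<Rightarrow> ('q \<Rightarrow> 'k) \<Rightarrow> _)"
  by unfold_locales (auto simp: fun_scale_def fun_eq_iff algebra_simps)

text \<open>Extending by 0 outside Q makes the map linear on the whole function space.\<close>

definition mat_map :: "'p set \<Rightarrow> 'q set \<Rightarrow> ('q \<Rightarrow> 'p \<Rightarrow> 'k::field) \<Rightarrow> ('p \<Rightarrow> 'k) \<Rightarrow> 'q \<Rightarrow> 'k" where
  "mat_map P Q M z = (\<lambda>q. if q \<in> Q then \<Sum>p\<in>P. M q p * z p else 0)"

lemma linear_mat_map: "Vector_Spaces.linear fun_scale fun_scale (mat_map P Q M)"
  unfolding Vector_Spaces.linear_iff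
  by (auto simp: vector_space_fun_scale mat_map_def fun_scale_def fun_eq_iff sum.distrib sum_distrib_left
      algebra_simps)

lemma inj_on_mat_map:
  assumes "mat_injective P Q M"
  shows "inj_on (mat_map P Q M) {z. \<forall>p. p \<notin> P \<longrightarrow> z p = 0}"
proof (rule inj_onI)
  fix z z' assume z: "z \<in> {z. \<forall>p. p \<notin> P \<longrightarrow> z p = 0}" "z' \<in> {z. \<forall>p. p \<notin> P \<longrightarrow> z p = 0}"
    and eq: "mat_map P Q M z = mat_map P Q M z'"
  have "(\<Sum>p\<in>P. M q p * z p) = (\<Sum>p\<in>P. M q p * z' p)" if "q \<in> Q" for q
    using fun_cong[OF eq, of q] that by (simp add: mat_map_def)
  hence "\<forall>q\<in>Q. (\<Sum>p\<in>P. M q p * (z p - z' p)) = 0"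
    by (simp add: right_diff_distrib sum_subtractf)
  hence "\<forall>p\<in>P. z p - z' p = 0"
    using assms[unfolded mat_injective_def, rule_format, of "\<lambda>p. z p - z' p"] by blast
  thus "z = z'" using z by (auto simp: fun_eq_iff)
qed

lemma mat_map_delta:
  assumes "finite P" "finite Q" "p' \<in> P"
  shows "mat_map P Q M (\<lambda>p. if p = p' then 1 else 0) = (\<Sum>q\<in>Q. fun_scale (M q p') (\<lambda>x. if x = q then 1 else 0))"
proof
  fix x
  have "(\<Sum>q\<in>Q. fun_scale (M q p') (\<lambda>x. if x = q then 1 else 0)) x = (\<Sum>q\<in>Q. if x = q then M q p' else 0)"
    unfolding sum_fun_apply fun_scale_def by (intro sum.cong) auto
  thus "mat_map P Q M (\<lambda>p. if p = p' then 1 else 0) x = (\<Sum>q\<in>Q. fun_scale (M q p') (\<lambda>x. if x = q then 1 else 0)) x"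
    using assms by (simp add: mat_map_def if_distrib[of "\<lambda>u. _ * u"] cong: if_cong)
qed

lemma mat_left_inverse_if_injective:
  fixes M :: "'q \<Rightarrow> 'p \<Rightarrow> 'k::field"
  assumes P: "finite P" and Q: "finite Q" and inj: "mat_injective P Q M"
  shows "\<exists>G. \<forall>p\<in>P. \<forall>p'\<in>P. (\<Sum>q\<in>Q. G p q * M q p') = (if p = p' then 1 else 0)"
proof -
  define U where "U = {z :: 'p \<Rightarrow> 'k. \<forall>p. p \<notin> P \<longrightarrow> z p = 0}"
  interpret vp: vector_space_pair "fun_scale :: 'k \<Rightarrow> ('p \<Rightarrow> 'k) \<Rightarrow> _" "fun_scale :: 'k \<Rightarrow> ('q \<Rightarrow> 'k) \<Rightarrow> _"
    unfolding vector_space_pair_def by (simp add: vector_space_fun_scale)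
  have "vp.vs1.subspace U"
    unfolding vp.vs1.subspace_def U_def by (auto simp: fun_scale_def)
  from vp.linear_exists_left_inverse_on[OF linear_mat_map this inj_on_mat_map[OF inj, folded U_def]]
  obtain g where g: "g ` UNIV \<subseteq> U" "Vector_Spaces.linear fun_scale fun_scale g" "\<forall>v\<in>U. g (mat_map P Q M v) = v"
    by blast
  interpret g: Vector_Spaces.linear fun_scale fun_scale g by (rule g(2))
  define \<delta> :: "'q \<Rightarrow> 'q \<Rightarrow> 'k" where "\<delta> q = (\<lambda>x. if x = q then 1 else 0)" for q
  show ?thesis
  proof (intro exI ballI)
    fix p p' assume p: "p \<in> P" and p': "p' \<in> P"
    have "(\<lambda>x. if x = p' then 1 else 0) \<in> U" using p' by (simp add: U_def)
    hence "(\<lambda>x. if x = p' then 1 else 0) = g (mat_map P Q M (\<lambda>x. if x = p' then 1 else 0))"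
      using g(3) by simp
    also have "\<dots> = (\<Sum>q\<in>Q. fun_scale (M q p') (g (\<delta> q)))"
      unfolding mat_map_delta[OF P Q p'] g.sum g.scale \<delta>_def ..
    finally have "(if p = p' then 1 else 0) = (\<Sum>q\<in>Q. g (\<delta> q) p * M q p')"
      by (simp add: fun_eq_iff sum_fun_apply fun_scale_def mult.commute)
    thus "(\<Sum>q\<in>Q. g (\<delta> q) p * M q p') = (if p = p' then 1 else 0)" ..
  qed
qed

lemma poly_mat_generically_injective:
  fixes N :: "'q \<Rightarrow> 'p \<Rightarrow> 'k::field poly"
  assumes P: "finite P" and Q: "finite Q" and N0: "mat_injective P Q (\<lambda>q p. poly (N q p) 0)"
  shows "\<exists>S. finite S \<and> (\<forall>t. t \<notin> S \<longrightarrow> mat_injective P Q (\<lambda>q p. poly (N q p) t))"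
proof -
  obtain G where G: "\<forall>p\<in>P. \<forall>p'\<in>P. (\<Sum>q\<in>Q. G p q * poly (N q p') 0) = (if p = p' then 1 else 0)"
    using mat_left_inverse_if_injective[OF P Q N0] by blast
  define E where "E p p' = (\<Sum>q\<in>Q. smult (G p q) (N q p'))" for p p'
  have E: "poly (E p p') t = (\<Sum>q\<in>Q. G p q * poly (N q p') t)" for p p' t
    unfolding E_def by (simp add: poly_sum)
  obtain S where S: "finite S" "\<And>t. t \<notin> S \<Longrightarrow> mat_injective P P (\<lambda>p p'. poly (E p p') t)"
    using poly_mat_generically_bijective[OF P, of E] G by (auto simp: E)
  have "mat_injective P Q (\<lambda>q p. poly (N q p) t)" if t: "t \<notin> S" for t
    unfolding mat_injective_def
  proof (intro allI impI)
    fix z assume z: "\<forall>q\<in>Q. (\<Sum>p\<in>P. poly (N q p) t * z p) = 0"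
    have "(\<Sum>p'\<in>P. poly (E p p') t * z p') = (\<Sum>q\<in>Q. G p q * (\<Sum>p'\<in>P. poly (N q p') t * z p'))" for p
      unfolding E sum_distrib_left sum_distrib_right mult.assoc by (rule sum.swap)
    thus "\<forall>p\<in>P. z p = 0" using S(2)[OF t] z unfolding mat_injective_def by simp
  qed
  thus ?thesis using S(1) by blast
qed

lemma zero_in_pideal [simp]: "0 \<in> pideal c"
  unfolding pideal_def by (rule range_eqI[of _ _ 0]) simp

lemma pideal_add: "x \<in> pideal c \<Longrightarrow> y \<in> pideal c \<Longrightarrow> x + y \<in> pideal c"
  unfolding pideal_def by (auto simp: distrib_left[symmetric])

lemma pideal_diff: "x \<in> pideal c \<Longrightarrow> y \<in> pideal c \<Longrightarrow> x - y \<in> pideal c"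
  unfolding pideal_def by (auto simp: right_diff_distrib[symmetric])

lemma pideal_sum: "(\<And>i. i \<in> I \<Longrightarrow> f i \<in> pideal c) \<Longrightarrow> sum f I \<in> pideal c"
  by (induction I rule: infinite_finite_induct) (auto intro: pideal_add)

lemma pideal_0 [simp]: "pideal 0 = {0}"
  unfolding pideal_def by auto

lemma pideal_1 [simp]: "pideal 1 = UNIV"
  unfolding pideal_def by auto

lemma pideal_power_mult:
  assumes "x \<in> pideal (l ^ a)" "y \<in> pideal (l ^ b)"
  shows "x * y \<in> pideal (l ^ (a + b))"
proof -
  obtain u v where "x = l ^ a * u" "y = l ^ b * v" using assms unfolding pideal_def by auto
  hence "x * y = l ^ (a + b) * (u * v)" by (simp add: power_add ac_simps)
  thus ?thesis unfolding pideal_def by auto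
qed

lemma pideal_power_antimono:
  assumes "a \<le> b" shows "pideal (l ^ b) \<subseteq> pideal (l ^ a)"
proof
  fix x assume "x \<in> pideal (l ^ b)"
  then obtain y where "x = l ^ b * y" unfolding pideal_def by auto
  hence "x = l ^ a * (l ^ (b - a) * y)"
    using assms by (simp add: power_add[symmetric] mult.assoc[symmetric])
  thus "x \<in> pideal (l ^ a)" unfolding pideal_def by auto
qed

lemma coset_pideal_eq_iff: "coset (pideal c) x = coset (pideal c) y \<longleftrightarrow> x - y \<in> pideal c"
proof
  assume "coset (pideal c) x = coset (pideal c) y"
  moreover have "x \<in> coset (pideal c) x" unfolding coset_def by (rule image_eqI[of _ _ 0]) auto
  ultimately obtain z where "z \<in> pideal c" "x = y + z" unfolding coset_def by auto
  thus "x - y \<in> pideal c" by simp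
next
  assume h: "x - y \<in> pideal c"
  have "x + z \<in> (+) y ` pideal c" if "z \<in> pideal c" for z
    using pideal_add[OF h that] by (intro image_eqI[of _ _ "x - y + z"]) auto
  moreover have "y + z \<in> (+) x ` pideal c" if "z \<in> pideal c" for z
    using pideal_diff[OF that h] by (intro image_eqI[of _ _ "z - (x - y)"]) auto
  ultimately show "coset (pideal c) x = coset (pideal c) y" unfolding coset_def by blast
qed

lemma gr_rep_coset: "gr_rep (coset (pideal c) x) - x \<in> pideal c"
proof -
  have "x \<in> coset (pideal c) x" unfolding coset_def by (rule image_eqI[of _ _ 0]) auto
  hence "gr_rep (coset (pideal c) x) \<in> coset (pideal c) x" unfolding gr_rep_def by (rule someI)
  thus ?thesis unfolding coset_def by auto
qed

locale std_graded_artinian =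
  fixes scale :: "'k::field \<Rightarrow> 'a::comm_ring_1 \<Rightarrow> 'a" and A :: "nat \<Rightarrow> 'a set"
  assumes std_graded_artinian: "standard_graded_artinian_algebra scale A"
begin

sublocale vs: vector_space scale
  using std_graded_artinian
  unfolding standard_graded_artinian_algebra_def standard_graded_algebra_def k_algebra_def by blast

lemma scale_mult_left: "scale c (x * y) = scale c x * y"
  using std_graded_artinian
  unfolding standard_graded_artinian_algebra_def standard_graded_algebra_def k_algebra_def by blast

lemma scale_mult_right: "scale c (x * y) = x * scale c y"
  by (metis scale_mult_left mult.commute)

lemma subspace_piece: "vs.subspace (A i)"
  using std_graded_artinian
  unfolding standard_graded_artinian_algebra_def standard_graded_algebra_def by blast

lemma mult_in_piece: "x \<in> A i \<Longrightarrow> y \<in> A j \<Longrightarrow> x * y \<in> A (i + j)"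
  using std_graded_artinian
  unfolding standard_graded_artinian_algebra_def standard_graded_algebra_def by blast

lemma piece_0: "A 0 = range (\<lambda>c. scale c 1)"
  using std_graded_artinian
  unfolding standard_graded_artinian_algebra_def standard_graded_algebra_def by blast

lemma finite_span_piece_1: "\<exists>B. finite B \<and> vs.span B = A 1"
  using std_graded_artinian
  unfolding standard_graded_artinian_algebra_def standard_graded_algebra_def by blast

lemma piece_Suc: "A (Suc i) = vs.span {x * y | x y. x \<in> A 1 \<and> y \<in> A i}"
  using std_graded_artinian
  unfolding standard_graded_artinian_algebra_def standard_graded_algebra_def by blast

lemma ex1_homogeneous_components:
  "\<exists>!c. (\<forall>i. c i \<in> A i) \<and> finite {i. c i \<noteq> 0} \<and> x = (\<Sum>i\<in>{i. c i \<noteq> 0}. c i)"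
  using std_graded_artinian
  unfolding standard_graded_artinian_algebra_def standard_graded_algebra_def by blast

lemma artinian: "artinian_ring TYPE('a)"
  using std_graded_artinian unfolding standard_graded_artinian_algebra_def by blast

lemma one_in_piece_0: "1 \<in> A 0"
  unfolding piece_0 by (rule range_eqI[of _ _ 1]) simp

lemma zero_in_piece: "0 \<in> A i"
  using vs.subspace_0[OF subspace_piece] .

lemma add_in_piece: "x \<in> A i \<Longrightarrow> y \<in> A i \<Longrightarrow> x + y \<in> A i"
  using vs.subspace_add[OF subspace_piece] .

lemma diff_in_piece: "x \<in> A i \<Longrightarrow> y \<in> A i \<Longrightarrow> x - y \<in> A i"
  using vs.subspace_diff[OF subspace_piece] .

lemma scale_in_piece: "x \<in> A i \<Longrightarrow> scale c x \<in> A i"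
  using vs.subspace_scale[OF subspace_piece] .

lemma sum_in_piece: "(\<And>x. x \<in> B \<Longrightarrow> f x \<in> A i) \<Longrightarrow> sum f B \<in> A i"
  using vs.subspace_sum[OF subspace_piece] .

lemma power_in_piece: "l \<in> A 1 \<Longrightarrow> l ^ n \<in> A n"
  by (induction n) (use one_in_piece_0 mult_in_piece[of l 1] in auto)

definition homogeneous_decomp :: "'a \<Rightarrow> nat set \<Rightarrow> (nat \<Rightarrow> 'a) \<Rightarrow> bool" where
  "homogeneous_decomp x G c \<longleftrightarrow>
     finite G \<and> (\<forall>i. c i \<in> A i) \<and> (\<forall>i. i \<notin> G \<longrightarrow> c i = 0) \<and> x = (\<Sum>i\<in>G. c i)"

lemma homogeneous_decomp_unique:
  assumes "homogeneous_decomp x G c" "homogeneous_decomp x G' c'"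
  shows "c = c'"
proof -
  have normal: "(\<forall>i. d i \<in> A i) \<and> finite {i. d i \<noteq> 0} \<and> x = (\<Sum>i\<in>{i. d i \<noteq> 0}. d i)"
    if "homogeneous_decomp x H d" for H d
  proof -
    have H: "finite H" "{i. d i \<noteq> 0} \<subseteq> H" using that unfolding homogeneous_decomp_def by auto
    have "x = (\<Sum>i\<in>H. d i)" using that unfolding homogeneous_decomp_def by auto
    also have "\<dots> = (\<Sum>i\<in>{i. d i \<noteq> 0}. d i)"
      by (rule sum.mono_neutral_right[OF H]) auto
    finally show ?thesis using that H finite_subset unfolding homogeneous_decomp_def by blast
  qed
  show ?thesis
    using ex1_homogeneous_components[of x] normal[OF assms(1)] normal[OF assms(2)] by blast
qed

lemma homogeneous_decomp_add:
  assumes "homogeneous_decomp x G c" "homogeneous_decomp y G' c'"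
  shows "homogeneous_decomp (x + y) (G \<union> G') (\<lambda>i. c i + c' i)"
proof -
  have fin: "finite G" "finite G'" using assms unfolding homogeneous_decomp_def by auto
  have "x = (\<Sum>i\<in>G \<union> G'. c i)" "y = (\<Sum>i\<in>G \<union> G'. c' i)"
    using assms unfolding homogeneous_decomp_def by (auto intro!: sum.mono_neutral_left fin)
  thus ?thesis using assms fin add_in_piece unfolding homogeneous_decomp_def by (auto simp: sum.distrib)
qed

lemma homogeneous_decomp_scale:
  "homogeneous_decomp x G c \<Longrightarrow> homogeneous_decomp (scale a x) G (\<lambda>i. scale a (c i))"
  unfolding homogeneous_decomp_def using scale_in_piece by (simp add: vs.scale_sum_right)

lemma homogeneous_decomp_if_in_span:
  assumes "x \<in> vs.span (\<Union>d\<in>D. A d)"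
  shows "\<exists>G c. G \<subseteq> D \<and> homogeneous_decomp x G c"
  using assms
proof (induction rule: vs.span_induct)
  case (step x)
  then obtain d where d: "d \<in> D" "x \<in> A d" by auto
  hence "homogeneous_decomp x {d} (\<lambda>i. if i = d then x else 0)"
    unfolding homogeneous_decomp_def using zero_in_piece by auto
  thus ?case using d by blast
next
  case base
  show ?case
  proof (rule vs.subspaceI)
    show "0 \<in> {x. \<exists>G c. G \<subseteq> D \<and> homogeneous_decomp x G c}"
      using zero_in_piece
      by (auto simp: homogeneous_decomp_def intro!: exI[of _ "{}"] exI[of _ "\<lambda>_. 0"])
    fix x y assume "x \<in> {x. \<exists>G c. G \<subseteq> D \<and> homogeneous_decomp x G c}"
    then obtain G c where G: "G \<subseteq> D" "homogeneous_decomp x G c" by blast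
    {
      assume "y \<in> {x. \<exists>G c. G \<subseteq> D \<and> homogeneous_decomp x G c}"
      then obtain G' c' where G': "G' \<subseteq> D" "homogeneous_decomp y G' c'" by blast
      have "homogeneous_decomp (x + y) (G \<union> G') (\<lambda>i. c i + c' i)"
        by (rule homogeneous_decomp_add[OF G(2) G'(2)])
      moreover have "G \<union> G' \<subseteq> D" using G(1) G'(1) by simp
      ultimately show "x + y \<in> {x. \<exists>G c. G \<subseteq> D \<and> homogeneous_decomp x G c}" by blast
    }
    fix a
    have "homogeneous_decomp (scale a x) G (\<lambda>i. scale a (c i))"
      by (rule homogeneous_decomp_scale[OF G(2)])
    thus "scale a x \<in> {x. \<exists>G c. G \<subseteq> D \<and> homogeneous_decomp x G c}" using G(1) by blast
  qed
qed

lemma mult_in_span_pieces_atLeast: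
  assumes c: "c \<in> A i" and x: "x \<in> vs.span (\<Union>d\<in>{n..}. A d)"
  shows "c * x \<in> vs.span (\<Union>d\<in>{n..}. A d)"
  using x
proof (induction rule: vs.span_induct)
  case (step x)
  then obtain d where "d \<ge> n" "x \<in> A d" by auto
  hence "c * x \<in> A (i + d)" "i + d \<in> {n..}" using mult_in_piece[OF c] by auto
  thus ?case by (meson UN_I vs.span_base)
next
  case base
  show ?case
    by (rule vs.subspaceI)
      (auto simp: vs.span_zero vs.span_add distrib_left scale_mult_right[symmetric] vs.span_scale)
qed

lemma ring_ideal_span_pieces_atLeast: "ring_ideal (vs.span (\<Union>d\<in>{n..}. A d))"
  unfolding ring_ideal_def
proof (intro conjI ballI allI)
  show "0 \<in> vs.span (\<Union>d\<in>{n..}. A d)" by (rule vs.span_zero)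
  show "x + y \<in> vs.span (\<Union>d\<in>{n..}. A d)"
    if "x \<in> vs.span (\<Union>d\<in>{n..}. A d)" "y \<in> vs.span (\<Union>d\<in>{n..}. A d)" for x y
    using that by (rule vs.span_add)
  fix x r assume x: "x \<in> vs.span (\<Union>d\<in>{n..}. A d)"
  obtain c where c: "\<forall>i. c i \<in> A i" "r = (\<Sum>i\<in>{i. c i \<noteq> 0}. c i)"
    using ex1_homogeneous_components[of r] by blast
  have "r * x = (\<Sum>i\<in>{i. c i \<noteq> 0}. c i * x)" unfolding c(2) by (simp add: sum_distrib_right)
  also have "\<dots> \<in> vs.span (\<Union>d\<in>{n..}. A d)"
    by (rule vs.span_sum) (rule mult_in_span_pieces_atLeast[OF c(1)[rule_format] x])
  finally show "r * x \<in> vs.span (\<Union>d\<in>{n..}. A d)" .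
qed

lemma piece_zero_if_span_pieces_stable:
  assumes "vs.span (\<Union>d\<in>{Suc n..}. A d) = vs.span (\<Union>d\<in>{n..}. A d)"
  shows "A n = {0}"
proof -
  have "x = 0" if x: "x \<in> A n" for x
  proof -
    have "x \<in> vs.span (\<Union>d\<in>{Suc n..}. A d)" using x assms by (auto intro: vs.span_base)
    then obtain G c where G: "G \<subseteq> {Suc n..}" "homogeneous_decomp x G c"
      using homogeneous_decomp_if_in_span by blast
    have "homogeneous_decomp x {n} (\<lambda>i. if i = n then x else 0)"
      unfolding homogeneous_decomp_def using x zero_in_piece by auto
    from fun_cong[OF homogeneous_decomp_unique[OF this G(2)], of n] have "x = c n" by simp
    also have "c n = 0" using G unfolding homogeneous_decomp_def by auto
    finally show ?thesis .
  qed
  thus ?thesis using zero_in_piece by blast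
qed

lemma pieces_zero_from:
  assumes "A n = {0}" "n \<le> m"
  shows "A m = {0}"
  using assms(2)
proof (induction m rule: dec_induct)
  case base thus ?case by (rule assms(1))
next
  case (step m)
  have "{x * y | x y. x \<in> A 1 \<and> y \<in> A m} \<subseteq> {0}" using step.IH by auto
  hence "A (Suc m) \<subseteq> vs.span {0}" unfolding piece_Suc by (rule vs.span_mono)
  thus ?case using zero_in_piece by auto
qed

lemma pieces_eventually_zero: "\<exists>N. \<forall>n\<ge>N. A n = {0}"
proof -
  define I where "I n = vs.span (\<Union>d\<in>{n..}. A d)" for n
  have "I (Suc n) \<subseteq> I n" for n
    unfolding I_def by (rule vs.span_mono) (auto intro: Suc_leD)
  moreover have "\<not> (\<forall>n. ring_ideal (I n) \<and> I (Suc n) \<subset> I n)"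
    using artinian unfolding artinian_ring_def by blast
  ultimately obtain n where "I (Suc n) = I n"
    using ring_ideal_span_pieces_atLeast unfolding I_def by blast
  hence "A n = {0}" unfolding I_def by (rule piece_zero_if_span_pieces_stable)
  thus ?thesis using pieces_zero_from by blast
qed

lemma mult_in_span_products:
  assumes x: "x \<in> vs.span B1" and y: "y \<in> vs.span B2"
  shows "x * y \<in> vs.span {b * b' | b b'. b \<in> B1 \<and> b' \<in> B2}"
proof -
  let ?T = "{b * b' | b b'. b \<in> B1 \<and> b' \<in> B2}"
  have left: "x * b' \<in> vs.span ?T" if b': "b' \<in> B2" for b'
    using x
  proof (induction rule: vs.span_induct)
    case (step x) thus ?case using b' by (blast intro: vs.span_base)
  next
    case base show ?case
      by (rule vs.subspaceI)
        (auto simp: vs.span_zero vs.span_add distrib_right scale_mult_left[symmetric] vs.span_scale)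
  qed
  show ?thesis using y
  proof (induction rule: vs.span_induct)
    case (step y) thus ?case using left by blast
  next
    case base show ?case
      by (rule vs.subspaceI)
        (auto simp: vs.span_zero vs.span_add distrib_left scale_mult_right[symmetric] vs.span_scale)
  qed
qed

lemma finite_span_piece: "\<exists>B. finite B \<and> A i = vs.span B"
proof (induction i)
  case 0
  have "A 0 = vs.span {1}" unfolding piece_0 vs.span_singleton by simp
  thus ?case by blast
next
  case (Suc i)
  obtain B1 where B1: "finite B1" "vs.span B1 = A 1" using finite_span_piece_1 by blast
  obtain B2 where B2: "finite B2" "A i = vs.span B2" using Suc.IH by blast
  let ?T = "{b * b' | b b'. b \<in> B1 \<and> b' \<in> B2}"
  have "?T = (\<lambda>(b, b'). b * b') ` (B1 \<times> B2)" by auto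
  hence "finite ?T" using B1 B2 by simp
  moreover have "A (Suc i) \<subseteq> vs.span ?T"
    unfolding piece_Suc using mult_in_span_products B1 B2
    by (intro vs.span_minimal) (auto simp: vs.subspace_span)
  moreover have "?T \<subseteq> A (Suc i)"
    using mult_in_piece[of _ 1 _ i] B1 B2 vs.span_base by fastforce
  hence "vs.span ?T \<subseteq> A (Suc i)" using subspace_piece by (intro vs.span_minimal)
  ultimately show ?case by blast
qed

lemma scale_in_pideal: "x \<in> pideal c \<Longrightarrow> scale a x \<in> pideal c"
  unfolding pideal_def by (auto simp: scale_mult_right intro: range_eqI)

lemma subspace_pideal: "vs.subspace (pideal c)"
  by (rule vs.subspaceI) (auto intro: pideal_add scale_in_pideal)

definition of_scalar :: "'k \<Rightarrow> 'a" where
  "of_scalar c = scale c 1"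

lemma of_scalar_mult: "of_scalar (a * b) = of_scalar a * of_scalar b"
  unfolding of_scalar_def by (metis scale_mult_left mult_1_left vs.scale_scale)

lemma of_scalar_power: "of_scalar a ^ e = of_scalar (a ^ e)"
  by (induction e) (simp_all add: of_scalar_def of_scalar_mult[unfolded of_scalar_def])

lemma mult_of_scalar: "x * of_scalar c = scale c x"
  unfolding of_scalar_def by (metis scale_mult_right mult_1_right)

lemma maximal_rank_mult_if_piece_zero:
  assumes c: "c \<in> A d" and zero: "A i = {0} \<or> A (i + d) = {0}"
  shows "maximal_rank ((*) c) (A i) (A (i + d))"
proof (cases "A i = {0}")
  case True thus ?thesis by (simp add: maximal_rank_def)
next
  case False
  hence zero: "A (i + d) = {0}" using zero by blast
  have "(*) c ` A i = A (i + d)"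
  proof
    show "(*) c ` A i \<subseteq> A (i + d)"
    proof
      fix y assume "y \<in> (*) c ` A i"
      then obtain x where "x \<in> A i" "y = c * x" by blast
      thus "y \<in> A (i + d)" using mult_in_piece[OF \<open>x \<in> A i\<close> c] by (simp add: mult.commute)
    qed
    have "c * 0 \<in> (*) c ` A i" using zero_in_piece by (rule imageI)
    thus "A (i + d) \<subseteq> (*) c ` A i" using zero by simp
  qed
  thus ?thesis by (simp add: maximal_rank_def)
qed

end

section \<open>Bases adapted to the l-adic filtration\<close>

lemma (in vector_space) exists_filtration_adapted_basis:
  assumes "finite B0" "F 0 \<subseteq> span B0"
    and "\<And>j. subspace (F j)" and decr: "\<And>j. F (Suc j) \<subseteq> F j" and "\<And>j. j \<ge> R \<Longrightarrow> F j = {0}"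
  shows "\<exists>B. finite B \<and> independent B \<and> B \<subseteq> F 0 \<and> (\<forall>j. F j \<subseteq> span (B \<inter> F j))"
proof -
  have "\<exists>B. independent B \<and> B \<subseteq> F (R - K) \<and> (\<forall>j\<ge>R - K. F j \<subseteq> span (B \<inter> F j))" if "K \<le> R" for K
    using that
  proof (induction K)
    case 0
    show ?case by (rule exI[of _ "{}"]) (auto simp: assms(5) span_zero independent_empty)
  next
    case (Suc K)
    define m where "m = R - Suc K"
    have m: "R - K = Suc m" using Suc.prems unfolding m_def by simp
    obtain B where B: "independent B" "B \<subseteq> F (Suc m)" "\<forall>j\<ge>Suc m. F j \<subseteq> span (B \<inter> F j)"
      using Suc.IH Suc.prems m by auto
    have "B \<subseteq> F m" using B(2) decr by blast
    then obtain B' where B': "B \<subseteq> B'" "B' \<subseteq> F m" "independent B'" "F m \<subseteq> span B'"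
      using maximal_independent_subset_extend[OF _ B(1)] by metis
    have "F j \<subseteq> span (B' \<inter> F j)" if "m \<le> j" for j
    proof (cases "j = m")
      case True thus ?thesis using B' by (simp add: Int_absorb2)
    next
      case False
      hence "F j \<subseteq> span (B \<inter> F j)" using B(3) that by auto
      also have "\<dots> \<subseteq> span (B' \<inter> F j)" by (rule span_mono) (use B' in auto)
      finally show ?thesis .
    qed
    thus ?case using B' unfolding m_def by blast
  qed
  from this[of R] obtain B where B: "independent B" "B \<subseteq> F 0" "\<forall>j. F j \<subseteq> span (B \<inter> F j)"
    by auto
  moreover have "finite B" using independent_span_bound[OF assms(1) B(1)] B(2) assms(2) by blast
  ultimately show ?thesis by blast
qed

locale l_filtration = std_graded_artinian scale A
  for scale :: "'k::field \<Rightarrow> 'a::comm_ring_1 \<Rightarrow> 'a" and A +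
  fixes l :: 'a
  assumes l_in_piece_1: "l \<in> A 1"
begin

definition nil_order :: nat where
  "nil_order = (LEAST r. l ^ r = 0)"

lemma power_nil_order: "l ^ nil_order = 0"
proof -
  obtain N where "\<forall>n\<ge>N. A n = {0}" using pieces_eventually_zero by blast
  hence "l ^ N = 0" using power_in_piece[OF l_in_piece_1, of N] by auto
  thus ?thesis unfolding nil_order_def by (rule LeastI)
qed

lemma pideal_power_ge_nil_order: "e \<ge> nil_order \<Longrightarrow> pideal (l ^ e) = {0}"
  by (metis le_add_diff_inverse mult_zero_left pideal_0 power_add power_nil_order)

definition adapted_basis :: "nat \<Rightarrow> 'a set" where
  "adapted_basis i = (SOME B. finite B \<and> vs.independent B \<and> B \<subseteq> A i \<and>
     (\<forall>j. pideal (l ^ j) \<inter> A i \<subseteq> vs.span (B \<inter> pideal (l ^ j))))"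

lemma adapted_basis:
  "finite (adapted_basis i)" "vs.independent (adapted_basis i)" "adapted_basis i \<subseteq> A i"
  "pideal (l ^ j) \<inter> A i \<subseteq> vs.span (adapted_basis i \<inter> pideal (l ^ j))"
proof -
  let ?F = "\<lambda>j. pideal (l ^ j) \<inter> A i"
  obtain B0 where B0: "finite B0" "A i = vs.span B0" using finite_span_piece by blast
  have "\<exists>B. finite B \<and> vs.independent B \<and> B \<subseteq> ?F 0 \<and> (\<forall>j. ?F j \<subseteq> vs.span (B \<inter> ?F j))"
  proof (rule vs.exists_filtration_adapted_basis[OF B0(1)])
    show "?F 0 \<subseteq> vs.span B0" using B0 by auto
    show "vs.subspace (?F j)" for j by (intro vs.subspace_inter subspace_pideal subspace_piece)
    show "?F (Suc j) \<subseteq> ?F j" for j using pideal_power_antimono[of j "Suc j" l] by auto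
    show "?F j = {0}" if "j \<ge> nil_order" for j
      using pideal_power_ge_nil_order[OF that] zero_in_piece by auto
  qed
  then obtain B where B: "finite B" "vs.independent B" "B \<subseteq> A i"
    "\<forall>j. ?F j \<subseteq> vs.span (B \<inter> ?F j)" by auto
  moreover have "B \<inter> ?F j = B \<inter> pideal (l ^ j)" for j using B(3) by auto
  ultimately have "finite B \<and> vs.independent B \<and> B \<subseteq> A i \<and>
    (\<forall>j. pideal (l ^ j) \<inter> A i \<subseteq> vs.span (B \<inter> pideal (l ^ j)))" by auto
  hence "finite (adapted_basis i) \<and> vs.independent (adapted_basis i) \<and> adapted_basis i \<subseteq> A i \<and>
    (\<forall>j. pideal (l ^ j) \<inter> A i \<subseteq> vs.span (adapted_basis i \<inter> pideal (l ^ j)))"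
    unfolding adapted_basis_def by (rule someI)
  thus "finite (adapted_basis i)" "vs.independent (adapted_basis i)" "adapted_basis i \<subseteq> A i"
    "pideal (l ^ j) \<inter> A i \<subseteq> vs.span (adapted_basis i \<inter> pideal (l ^ j))" by auto
qed

lemma adapted_basis_nonzero: "b \<in> adapted_basis i \<Longrightarrow> b \<noteq> 0"
  using adapted_basis(2) vs.dependent_zero by blast

lemma span_adapted_basis: "vs.span (adapted_basis i) = A i"
proof
  show "vs.span (adapted_basis i) \<subseteq> A i"
    using adapted_basis(3) subspace_piece by (rule vs.span_minimal)
  show "A i \<subseteq> vs.span (adapted_basis i)" using adapted_basis(4)[of 0 i] by simp
qed

definition l_order :: "'a \<Rightarrow> nat" where
  "l_order b = (GREATEST j. b \<in> pideal (l ^ j))"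

lemma in_pideal_power_iff:
  assumes "b \<noteq> 0"
  shows "b \<in> pideal (l ^ j) \<longleftrightarrow> j \<le> l_order b"
proof -
  have bound: "j' \<le> nil_order" if "b \<in> pideal (l ^ j')" for j'
    using that assms pideal_power_ge_nil_order[of j'] by (cases "j' \<ge> nil_order") auto
  have "b \<in> pideal (l ^ 0)" by simp
  hence "b \<in> pideal (l ^ l_order b)"
    unfolding l_order_def by (rule GreatestI_nat[where P = "\<lambda>j. b \<in> pideal (l ^ j)", OF _ bound])
  moreover have "j \<le> l_order b" if "b \<in> pideal (l ^ j)"
    unfolding l_order_def by (rule Greatest_le_nat[where P = "\<lambda>j. b \<in> pideal (l ^ j)", OF that bound])
  ultimately show ?thesis using pideal_power_antimono[of j "l_order b" l] by auto
qed

lemma adapted_basis_in_pideal: "b \<in> adapted_basis i \<Longrightarrow> b \<in> pideal (l ^ l_order b)"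
  using in_pideal_power_iff[OF adapted_basis_nonzero] by blast

definition coord :: "nat \<Rightarrow> 'a \<Rightarrow> 'a \<Rightarrow> 'k" where
  "coord i w b = vs.representation (adapted_basis i) w b"

lemma coord_expand: "w \<in> A i \<Longrightarrow> w = (\<Sum>b\<in>adapted_basis i. scale (coord i w b) b)"
  unfolding coord_def
  using vs.sum_representation_eq[OF adapted_basis(2)[of i], of w "adapted_basis i"]
    adapted_basis(1) span_adapted_basis by auto

lemma coord_eqI:
  "w \<in> A i \<Longrightarrow> w' \<in> A i \<Longrightarrow> (\<And>b. b \<in> adapted_basis i \<Longrightarrow> coord i w b = coord i w' b) \<Longrightarrow> w = w'"
  using coord_expand[of w i] coord_expand[of w' i] by (metis (no_types, lifting) sum.cong)

lemma coord_sum: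
  "(\<And>k. k \<in> K \<Longrightarrow> f k \<in> A i) \<Longrightarrow> coord i (\<Sum>k\<in>K. f k) b = (\<Sum>k\<in>K. coord i (f k) b)"
  unfolding coord_def using vs.representation_sum[OF adapted_basis(2)[of i], of K f] span_adapted_basis
  by auto

lemma coord_scale: "w \<in> A i \<Longrightarrow> coord i (scale c w) b = c * coord i w b"
  unfolding coord_def using vs.representation_scale[OF adapted_basis(2)[of i], of w c] span_adapted_basis
  by auto

lemma coord_diff: "w \<in> A i \<Longrightarrow> w' \<in> A i \<Longrightarrow> coord i (w - w') b = coord i w b - coord i w' b"
  unfolding coord_def using vs.representation_diff[OF adapted_basis(2)[of i], of w' w] span_adapted_basis
  by auto

lemma coord_zero: "coord i 0 b = 0"
  unfolding coord_def by (simp add: vs.representation_zero)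

lemma coord_basis: "b' \<in> adapted_basis i \<Longrightarrow> coord i b' b = (if b = b' then 1 else 0)"
  unfolding coord_def using vs.representation_basis[OF adapted_basis(2)[of i]] by auto

lemma coord_basis_combination:
  assumes "B \<subseteq> adapted_basis i"
  shows "coord i (\<Sum>b\<in>B. scale (c b) b) p = (if p \<in> B then c p else 0)"
proof -
  have fin: "finite B" using assms adapted_basis(1) finite_subset by blast
  have inB: "b \<in> adapted_basis i" "b \<in> A i" if "b \<in> B" for b
    using that assms adapted_basis(3) by blast+
  have "coord i (\<Sum>b\<in>B. scale (c b) b) p = (\<Sum>b\<in>B. coord i (scale (c b) b) p)"
    by (rule coord_sum) (use inB scale_in_piece in blast)
  also have "\<dots> = (\<Sum>b\<in>B. c b * (if p = b then 1 else 0))"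
    by (intro sum.cong refl) (simp add: inB coord_scale coord_basis)
  finally have "coord i (\<Sum>b\<in>B. scale (c b) b) p = (\<Sum>b\<in>B. c b * (if p = b then 1 else 0))" .
  thus ?thesis using fin by (simp add: if_distrib[of "\<lambda>u. _ * u"] cong: if_cong)
qed

lemma coord_mult:
  assumes "c \<in> A d" "v \<in> A i"
  shows "coord (i + d) (c * v) q = (\<Sum>p\<in>adapted_basis i. coord i v p * coord (i + d) (c * p) q)"
proof -
  have cp: "c * p \<in> A (i + d)" if "p \<in> adapted_basis i" for p
  proof -
    have "p \<in> A i" using that adapted_basis(3) by blast
    from mult_in_piece[OF assms(1) this] show ?thesis by (simp add: add.commute)
  qed
  have cv: "c * v = (\<Sum>p\<in>adapted_basis i. scale (coord i v p) (c * p))"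
    by (subst coord_expand[OF assms(2)]) (simp add: sum_distrib_left scale_mult_right)
  have "coord (i + d) (\<Sum>p\<in>adapted_basis i. scale (coord i v p) (c * p)) q
      = (\<Sum>p\<in>adapted_basis i. coord (i + d) (scale (coord i v p) (c * p)) q)"
    by (rule coord_sum) (simp add: cp scale_in_piece)
  also have "\<dots> = (\<Sum>p\<in>adapted_basis i. coord i v p * coord (i + d) (c * p) q)"
    by (intro sum.cong refl) (simp add: coord_scale cp)
  finally show ?thesis unfolding cv .
qed

lemma coord_eq_0_if_in_pideal:
  assumes "w \<in> pideal (l ^ j)" "w \<in> A i" "b \<in> adapted_basis i" "l_order b < j"
  shows "coord i w b = 0"
proof -
  have w: "w \<in> vs.span (adapted_basis i \<inter> pideal (l ^ j))" using adapted_basis(4)[of j i] assms by auto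
  have "coord i w b = vs.representation (adapted_basis i \<inter> pideal (l ^ j)) w b"
    unfolding coord_def using vs.representation_extend[OF adapted_basis(2) w] by auto
  moreover have "b \<notin> pideal (l ^ j)"
    using in_pideal_power_iff[OF adapted_basis_nonzero[OF assms(3)]] assms(4) by auto
  ultimately show ?thesis using vs.representation_ne_zero by auto
qed

lemma in_pideal_if_coord_eq_0:
  assumes "w \<in> A i" and "\<And>b. b \<in> adapted_basis i \<Longrightarrow> l_order b < j \<Longrightarrow> coord i w b = 0"
  shows "w \<in> pideal (l ^ j)"
proof -
  have "scale (coord i w b) b \<in> pideal (l ^ j)" if b: "b \<in> adapted_basis i" for b
  proof (cases "j \<le> l_order b")
    case True thus ?thesis using in_pideal_power_iff[OF adapted_basis_nonzero[OF b]] scale_in_pideal by blast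
  next
    case False thus ?thesis using assms(2)[OF b] by simp
  qed
  hence "(\<Sum>b\<in>adapted_basis i. scale (coord i w b) b) \<in> pideal (l ^ j)" by (rule pideal_sum)
  thus ?thesis using coord_expand[OF assms(1)] by simp
qed

definition level_sum :: "nat \<Rightarrow> ('a \<Rightarrow> 'k) \<Rightarrow> nat \<Rightarrow> 'a" where
  "level_sum i z k = (\<Sum>p\<in>{p\<in>adapted_basis i. l_order p = k}. scale (z p) p)"

lemma level_sum_in_pideal: "level_sum i z k \<in> pideal (l ^ k)"
  unfolding level_sum_def by (rule pideal_sum) (auto intro!: scale_in_pideal adapted_basis_in_pideal)

lemma level_sum_in_piece: "level_sum i z k \<in> A i"
  unfolding level_sum_def by (rule sum_in_piece) (use adapted_basis(3) scale_in_piece in blast)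

lemma coord_level_sum: "p \<in> adapted_basis i \<Longrightarrow> coord i (level_sum i z (l_order p)) p = z p"
  unfolding level_sum_def by (subst coord_basis_combination) auto

definition gr_class :: "(nat \<Rightarrow> 'a) \<Rightarrow> nat \<Rightarrow> 'a set" where
  "gr_class r = (\<lambda>j. coset (pideal (l ^ Suc j)) (r j))"

lemma gr_class_in_gr_grade: "(\<And>k. r k \<in> pideal (l ^ k) \<and> r k \<in> A i) \<Longrightarrow> gr_class r \<in> gr_grade A l i"
  unfolding gr_class_def gr_grade_def gr_piece_def by blast

lemma gr_grade_imp_ex_gr_class:
  assumes "g \<in> gr_grade A l i"
  shows "\<exists>r. (\<forall>k. r k \<in> pideal (l ^ k) \<and> r k \<in> A i) \<and> g = gr_class r"
proof -
  have "\<forall>k. \<exists>r. r \<in> pideal (l ^ k) \<and> r \<in> A i \<and> g k = coset (pideal (l ^ Suc k)) r"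
    using assms unfolding gr_grade_def gr_piece_def by blast
  then obtain r where r: "\<forall>k. r k \<in> pideal (l ^ k) \<and> r k \<in> A i \<and> g k = coset (pideal (l ^ Suc k)) (r k)"
    by metis
  moreover have "g = gr_class r" unfolding gr_class_def using r by auto
  ultimately show ?thesis by blast
qed

lemma gr_class_eq_iff: "gr_class r j = gr_class s j \<longleftrightarrow> r j - s j \<in> pideal (l ^ Suc j)"
  unfolding gr_class_def by (rule coset_pideal_eq_iff)

end

section \<open>Deforming a linear form of Gr_l(A) into A\<close>

locale gr_linear_form = l_filtration scale A l
  for scale :: "'k::field \<Rightarrow> 'a::comm_ring_1 \<Rightarrow> 'a" and A and l +
  fixes L :: "nat \<Rightarrow> 'a set"
  assumes L_in_gr_grade: "L \<in> gr_grade A l 1"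
begin

definition L_lift :: "nat \<Rightarrow> 'a" where
  "L_lift e = (SOME x. x \<in> pideal (l ^ e) \<and> x \<in> A 1 \<and> L e = coset (pideal (l ^ Suc e)) x)"

lemma L_lift: "L_lift e \<in> pideal (l ^ e)" "L_lift e \<in> A 1" "L e = coset (pideal (l ^ Suc e)) (L_lift e)"
proof -
  have "L e \<in> gr_piece A l e 1" using L_in_gr_grade unfolding gr_grade_def by blast
  hence "\<exists>x. x \<in> pideal (l ^ e) \<and> x \<in> A 1 \<and> L e = coset (pideal (l ^ Suc e)) x"
    unfolding gr_piece_def by blast
  from someI_ex[OF this]
  show "L_lift e \<in> pideal (l ^ e)" "L_lift e \<in> A 1" "L e = coset (pideal (l ^ Suc e)) (L_lift e)"
    unfolding L_lift_def by blast+
qed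

definition L_poly :: "'a poly" where
  "L_poly = (\<Sum>e<nil_order. monom (L_lift e) e)"

lemma coeff_L_poly: "coeff L_poly e = L_lift e"
proof -
  have "coeff L_poly e = (\<Sum>e'<nil_order. if e' = e then L_lift e' else 0)"
    unfolding L_poly_def coeff_sum coeff_monom by (rule sum.cong) auto
  also have "\<dots> = (if e < nil_order then L_lift e else 0)" by (simp add: sum.delta')
  also have "\<dots> = L_lift e" using L_lift(1)[of e] pideal_power_ge_nil_order[of e] by auto
  finally show ?thesis .
qed

lemma coeff_L_poly_power_Suc:
  "coeff (L_poly ^ Suc d) e = (\<Sum>a\<le>e. L_lift a * coeff (L_poly ^ d) (e - a))"
  by (simp add: coeff_mult coeff_L_poly)

lemma coeff_L_poly_power_mem: "coeff (L_poly ^ d) e \<in> pideal (l ^ e) \<and> coeff (L_poly ^ d) e \<in> A d"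
proof (induction d arbitrary: e)
  case 0
  show ?case using one_in_piece_0 zero_in_piece by (cases "e = 0") simp_all
next
  case (Suc d)
  have "L_lift a * coeff (L_poly ^ d) (e - a) \<in> pideal (l ^ e) \<and>
        L_lift a * coeff (L_poly ^ d) (e - a) \<in> A (Suc d)" if "a \<le> e" for a
    using pideal_power_mult[OF L_lift(1) Suc.IH[THEN conjunct1], of a "e - a"]
      mult_in_piece[OF L_lift(2) Suc.IH[THEN conjunct2], of a "e - a"] that
    by simp
  thus ?case unfolding coeff_L_poly_power_Suc by (auto intro!: pideal_sum sum_in_piece)
qed

lemmas coeff_L_poly_power_in_pideal = coeff_L_poly_power_mem[THEN conjunct1]
lemmas coeff_L_poly_power_in_piece = coeff_L_poly_power_mem[THEN conjunct2]

definition L_power_rep :: "nat \<Rightarrow> (nat \<Rightarrow> 'a) \<Rightarrow> nat \<Rightarrow> 'a" where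
  "L_power_rep d r j = (\<Sum>e\<le>j. coeff (L_poly ^ d) e * r (j - e))"

lemma L_power_rep_in_pideal:
  assumes "\<And>k. r k \<in> pideal (l ^ k)"
  shows "L_power_rep d r j \<in> pideal (l ^ j)"
  unfolding L_power_rep_def
proof (rule pideal_sum)
  fix e assume "e \<in> {..j}"
  hence "e + (j - e) = j" by simp
  thus "coeff (L_poly ^ d) e * r (j - e) \<in> pideal (l ^ j)"
    using pideal_power_mult[OF coeff_L_poly_power_in_pideal assms, of d e "j - e"] by simp
qed

lemma coeff_L_poly_power_mult_in_piece: "p \<in> A i \<Longrightarrow> coeff (L_poly ^ d) e * p \<in> A (i + d)"
  using mult_in_piece[OF _ coeff_L_poly_power_in_piece] by (simp add: mult.commute)

lemma L_power_rep_in_piece: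
  assumes "\<And>k. r k \<in> A i"
  shows "L_power_rep d r j \<in> A (i + d)"
  unfolding L_power_rep_def by (rule sum_in_piece) (rule coeff_L_poly_power_mult_in_piece[OF assms])

text \<open>Arbitrary representatives and the chosen lifts differ by terms whose products with
  the other factor lie in (l^(j+1)).\<close>

lemma gr_mult_L_gr_class:
  assumes s: "\<And>j. s j \<in> pideal (l ^ j)"
  shows "gr_mult l L (gr_class s) = gr_class (\<lambda>j. \<Sum>a\<le>j. L_lift a * s (j - a))"
proof
  fix j
  have "(\<Sum>a\<le>j. gr_rep (L a) * gr_rep (gr_class s (j - a)) - L_lift a * s (j - a)) \<in> pideal (l ^ Suc j)"
  proof (rule pideal_sum)
    fix a assume "a \<in> {..j}"
    hence a: "a \<le> j" by simp
    define \<alpha> where "\<alpha> = gr_rep (L a) - L_lift a"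
    define \<beta> where "\<beta> = gr_rep (gr_class s (j - a)) - s (j - a)"
    have \<alpha>: "\<alpha> \<in> pideal (l ^ Suc a)" unfolding \<alpha>_def L_lift(3)[of a] by (rule gr_rep_coset)
    have \<beta>: "\<beta> \<in> pideal (l ^ Suc (j - a))" unfolding \<beta>_def gr_class_def by (rule gr_rep_coset)
    have "gr_rep (L a) * gr_rep (gr_class s (j - a)) - L_lift a * s (j - a)
        = L_lift a * \<beta> + \<alpha> * s (j - a) + \<alpha> * \<beta>"
      unfolding \<alpha>_def \<beta>_def by (simp add: algebra_simps)
    moreover have "a + Suc (j - a) = Suc j" "Suc a + (j - a) = Suc j" using a by auto
    moreover have "\<alpha> * \<beta> \<in> pideal (l ^ Suc j)"
      using pideal_power_mult[OF \<alpha> \<beta>] pideal_power_antimono[of "Suc j" "Suc a + Suc (j - a)" l] a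
      by auto
    ultimately show "gr_rep (L a) * gr_rep (gr_class s (j - a)) - L_lift a * s (j - a) \<in> pideal (l ^ Suc j)"
      using pideal_power_mult[OF L_lift(1)[of a] \<beta>] pideal_power_mult[OF \<alpha> s[of "j - a"]]
      by (metis pideal_add)
  qed
  thus "gr_mult l L (gr_class s) j = gr_class (\<lambda>j. \<Sum>a\<le>j. L_lift a * s (j - a)) j"
    unfolding gr_mult_def gr_class_def coset_pideal_eq_iff sum_subtractf by simp
qed

lemma gr_mult_L_power_gr_class:
  assumes s: "\<And>j. s j \<in> pideal (l ^ j)"
  shows "(gr_mult l L ^^ d) (gr_class s) = gr_class (L_power_rep d s)"
proof (induction d)
  case 0
  have "L_power_rep 0 s = s" by (simp add: fun_eq_iff L_power_rep_def)
  thus ?case by simp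
next
  case (Suc d)
  have "(gr_mult l L ^^ Suc d) (gr_class s) = gr_class (\<lambda>j. \<Sum>a\<le>j. L_lift a * L_power_rep d s (j - a))"
    using Suc.IH gr_mult_L_gr_class[OF L_power_rep_in_pideal[OF s]] by simp
  also have "(\<lambda>j. \<Sum>a\<le>j. L_lift a * L_power_rep d s (j - a)) = L_power_rep (Suc d) s"
    unfolding L_power_rep_def sum_convolution_assoc coeff_L_poly_power_Suc ..
  finally show ?case .
qed

definition L_deform :: "'k \<Rightarrow> 'a" where
  "L_deform t = poly L_poly (of_scalar (inverse t))"

lemma L_deform_power:
  "L_deform t ^ d = (\<Sum>e\<le>degree (L_poly ^ d). scale (inverse t ^ e) (coeff (L_poly ^ d) e))"
proof -
  have "L_deform t ^ d = poly (L_poly ^ d) (of_scalar (inverse t))" unfolding L_deform_def by simp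
  also have "\<dots> = (\<Sum>e\<le>degree (L_poly ^ d). coeff (L_poly ^ d) e * of_scalar (inverse t) ^ e)"
    unfolding poly_altdef ..
  finally show ?thesis by (simp add: of_scalar_power mult_of_scalar)
qed

lemma L_deform_power_in_piece: "L_deform t ^ d \<in> A d"
  unfolding L_deform_power by (rule sum_in_piece) (use coeff_L_poly_power_in_piece scale_in_piece in blast)

lemma L_deform_in_piece_1: "L_deform t \<in> A 1"
  using L_deform_power_in_piece[of t 1] by simp

lemma L_deform_power_mult_in_piece: "p \<in> A i \<Longrightarrow> L_deform t ^ d * p \<in> A (i + d)"
  using mult_in_piece[OF _ L_deform_power_in_piece] by (simp add: mult.commute)

text \<open>At t = 0 this is the matrix of multiplication by L^d from Gr_l(A)_i to Gr_l(A)_(i+d)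
  (poly_deform_matrix_0, coord_L_power_rep); at t \<noteq> 0 it is the matrix of multiplication by
  (L_deform t)^d from A_i to A_(i+d) with each basis vector p rescaled by t^(l_order p)
  (coord_L_deform_power_mult).\<close>

definition deform_matrix :: "nat \<Rightarrow> nat \<Rightarrow> 'a \<Rightarrow> 'a \<Rightarrow> 'k poly" where
  "deform_matrix i d q p = (if l_order p \<le> l_order q then
     (\<Sum>e\<le>l_order q - l_order p. monom (coord (i + d) (coeff (L_poly ^ d) e * p) q) (l_order q - l_order p - e))
   else 0)"

lemma coord_coeff_L_poly_power_mult_eq_0:
  assumes p: "p \<in> adapted_basis i" and q: "q \<in> adapted_basis (i + d)" and "l_order q < e + l_order p"
  shows "coord (i + d) (coeff (L_poly ^ d) e * p) q = 0"
proof (rule coord_eq_0_if_in_pideal[OF _ _ q])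
  show "coeff (L_poly ^ d) e * p \<in> pideal (l ^ (e + l_order p))"
    using pideal_power_mult[OF coeff_L_poly_power_in_pideal adapted_basis_in_pideal[OF p]] .
  show "coeff (L_poly ^ d) e * p \<in> A (i + d)"
    using p adapted_basis(3) by (intro coeff_L_poly_power_mult_in_piece) blast
qed fact

lemma poly_deform_matrix_0:
  "poly (deform_matrix i d q p) 0 =
     (if l_order p \<le> l_order q then coord (i + d) (coeff (L_poly ^ d) (l_order q - l_order p) * p) q else 0)"
proof (cases "l_order p \<le> l_order q")
  case True
  define M where "M = l_order q - l_order p"
  define c where "c e = coord (i + d) (coeff (L_poly ^ d) e * p) q" for e
  have "poly (deform_matrix i d q p) 0 = (\<Sum>e\<le>M. c e * 0 ^ (M - e))"
    using True unfolding deform_matrix_def M_def c_def by (simp add: poly_sum poly_monom)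
  also have "\<dots> = (\<Sum>e\<le>M. if e = M then c e else 0)"
    by (rule sum.cong) auto
  finally show ?thesis using True unfolding M_def c_def by simp
next
  case False thus ?thesis unfolding deform_matrix_def by simp
qed

lemma coord_L_deform_power_mult_expand:
  assumes "p \<in> A i"
  shows "coord (i + d) (L_deform t ^ d * p) q
       = (\<Sum>e\<le>degree (L_poly ^ d). inverse t ^ e * coord (i + d) (coeff (L_poly ^ d) e * p) q)"
proof -
  have "L_deform t ^ d * p = (\<Sum>e\<le>degree (L_poly ^ d). scale (inverse t ^ e) (coeff (L_poly ^ d) e * p))"
    unfolding L_deform_power sum_distrib_right by (simp add: scale_mult_left)
  thus ?thesis
    by (simp add: coord_sum scale_in_piece coeff_L_poly_power_mult_in_piece[OF assms] coord_scale)
qed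

lemma coord_L_deform_power_mult:
  assumes t: "t \<noteq> 0" and p: "p \<in> adapted_basis i" and q: "q \<in> adapted_basis (i + d)"
  shows "coord (i + d) (L_deform t ^ d * p) q * t ^ l_order q = t ^ l_order p * poly (deform_matrix i d q p) t"
proof -
  define c where "c e = coord (i + d) (coeff (L_poly ^ d) e * p) q" for e
  define D where "D = degree (L_poly ^ d)"
  have expand: "coord (i + d) (L_deform t ^ d * p) q = (\<Sum>e\<le>D. inverse t ^ e * c e)"
    unfolding c_def D_def using p adapted_basis(3) by (intro coord_L_deform_power_mult_expand) blast
  have c_beyond_degree: "c e = 0" if "e > D" for e
    using that unfolding c_def D_def by (simp add: coeff_eq_0 coord_zero)
  have c_beyond_order: "c e = 0" if "l_order q < e + l_order p" for e
    unfolding c_def using coord_coeff_L_poly_power_mult_eq_0[OF p q that] .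
  show ?thesis
  proof (cases "l_order p \<le> l_order q")
    case True
    define M where "M = l_order q - l_order p"
    have "(\<Sum>e\<le>D. inverse t ^ e * c e) = (\<Sum>e\<le>D + M. inverse t ^ e * c e)"
      by (rule sum.mono_neutral_left) (auto simp: c_beyond_degree)
    also have "\<dots> = (\<Sum>e\<le>M. inverse t ^ e * c e)"
    proof (rule sum.mono_neutral_right)
      have "c e = 0" if "e \<in> {..D + M} - {..M}" for e
        using that True by (intro c_beyond_order) (auto simp: M_def)
      thus "\<forall>e\<in>{..D + M} - {..M}. inverse t ^ e * c e = 0" by simp
    qed auto
    finally have sum_M: "(\<Sum>e\<le>D. inverse t ^ e * c e) = (\<Sum>e\<le>M. inverse t ^ e * c e)" .
    have "t ^ l_order q = t ^ l_order p * t ^ M" using True by (simp add: M_def power_add[symmetric])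
    hence "coord (i + d) (L_deform t ^ d * p) q * t ^ l_order q
        = t ^ l_order p * (t ^ M * (\<Sum>e\<le>M. inverse t ^ e * c e))"
      unfolding expand sum_M by (simp only: ac_simps)
    also have "t ^ M * (\<Sum>e\<le>M. inverse t ^ e * c e) = (\<Sum>e\<le>M. c e * t ^ (M - e))"
      unfolding sum_distrib_left using t by (intro sum.cong refl) (simp add: power_diff field_simps)
    also have "\<dots> = poly (deform_matrix i d q p) t"
      using True unfolding deform_matrix_def M_def c_def by (simp add: poly_sum poly_monom)
    finally show ?thesis .
  next
    case False
    thus ?thesis unfolding expand deform_matrix_def using c_beyond_order by simp
  qed
qed

lemma coord_L_power_rep:
  assumes r: "\<And>k. r k \<in> pideal (l ^ k) \<and> r k \<in> A i" and q: "q \<in> adapted_basis (i + d)"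
  shows "coord (i + d) (L_power_rep d r (l_order q)) q
       = (\<Sum>p\<in>adapted_basis i. poly (deform_matrix i d q p) 0 * coord i (r (l_order p)) p)"
proof -
  define j where "j = l_order q"
  define a where "a e p = coord i (r (j - e)) p * coord (i + d) (coeff (L_poly ^ d) e * p) q" for e p
  define b where "b p = coord i (r (l_order p)) p * coord (i + d) (coeff (L_poly ^ d) (j - l_order p) * p) q"
    for p
  have a_diag: "a e p = (if l_order p \<le> j then if e = j - l_order p then b p else 0 else 0)"
    if "e \<le> j" "p \<in> adapted_basis i" for e p
  proof (cases "l_order p = j - e")
    case True thus ?thesis using that unfolding a_def b_def by auto
  next
    case False
    hence "l_order p < j - e \<or> l_order q < e + l_order p" unfolding j_def using that(1) by linarith
    hence "coord i (r (j - e)) p = 0 \<or> coord (i + d) (coeff (L_poly ^ d) e * p) q = 0"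
      using coord_eq_0_if_in_pideal[OF _ _ that(2)] coord_coeff_L_poly_power_mult_eq_0[OF that(2) q] r
      by blast
    thus ?thesis using False that unfolding a_def by auto
  qed
  have "coord (i + d) (L_power_rep d r j) q = (\<Sum>e\<le>j. coord (i + d) (coeff (L_poly ^ d) e * r (j - e)) q)"
    unfolding L_power_rep_def
    by (rule coord_sum) (rule coeff_L_poly_power_mult_in_piece, use r in blast)
  also have "\<dots> = (\<Sum>e\<le>j. \<Sum>p\<in>adapted_basis i. a e p)"
    unfolding a_def using r by (intro sum.cong refl) (simp add: coord_mult[OF coeff_L_poly_power_in_piece])
  also have "\<dots> = (\<Sum>p\<in>adapted_basis i. \<Sum>e\<le>j. a e p)"
    by (rule sum.swap)
  also have "\<dots> = (\<Sum>p\<in>adapted_basis i. if l_order p \<le> j then b p else 0)"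
  proof (intro sum.cong refl)
    fix p assume p: "p \<in> adapted_basis i"
    have "(\<Sum>e\<le>j. a e p) = (\<Sum>e\<le>j. if l_order p \<le> j then if e = j - l_order p then b p else 0 else 0)"
      using p by (intro sum.cong refl) (simp add: a_diag)
    thus "(\<Sum>e\<le>j. a e p) = (if l_order p \<le> j then b p else 0)"
      by (cases "l_order p \<le> j") simp_all
  qed
  also have "\<dots> = (\<Sum>p\<in>adapted_basis i. poly (deform_matrix i d q p) 0 * coord i (r (l_order p)) p)"
    by (intro sum.cong refl) (simp add: b_def poly_deform_matrix_0 j_def mult.commute)
  finally show ?thesis unfolding j_def .
qed

lemma gr_mult_L_power_gr_class_0: "(gr_mult l L ^^ d) (gr_class (\<lambda>_. 0)) = gr_class (\<lambda>_. 0)"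
proof -
  have "L_power_rep d (\<lambda>_. 0) = (\<lambda>_. 0)" by (simp add: fun_eq_iff L_power_rep_def)
  thus ?thesis using gr_mult_L_power_gr_class[of "\<lambda>_. 0" d] by simp
qed

lemma L_power_rep_level_sum_in_pideal_Suc:
  assumes z: "\<forall>q\<in>adapted_basis (i + d). (\<Sum>p\<in>adapted_basis i. poly (deform_matrix i d q p) 0 * z p) = 0"
  shows "L_power_rep d (level_sum i z) j \<in> pideal (l ^ Suc j)"
proof -
  let ?r = "level_sum i z"
  have r: "?r k \<in> pideal (l ^ k) \<and> ?r k \<in> A i" for k
    using level_sum_in_pideal level_sum_in_piece by blast
  show ?thesis
  proof (rule in_pideal_if_coord_eq_0[OF L_power_rep_in_piece])
    show "?r k \<in> A i" for k using r by blast
    fix b assume b: "b \<in> adapted_basis (i + d)" and "l_order b < Suc j"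
    show "coord (i + d) (L_power_rep d ?r j) b = 0"
    proof (cases "l_order b = j")
      case True
      have "coord (i + d) (L_power_rep d ?r j) b
          = (\<Sum>p\<in>adapted_basis i. poly (deform_matrix i d b p) 0 * z p)"
        using coord_L_power_rep[OF r b] True by (simp add: coord_level_sum cong: sum.cong)
      thus ?thesis using z b by simp
    next
      case False
      hence "l_order b < j" using \<open>l_order b < Suc j\<close> by simp
      moreover have "L_power_rep d ?r j \<in> pideal (l ^ j)" "L_power_rep d ?r j \<in> A (i + d)"
        using r by (blast intro: L_power_rep_in_pideal L_power_rep_in_piece)+
      ultimately show ?thesis using coord_eq_0_if_in_pideal[OF _ _ b] by blast
    qed
  qed
qed

lemma mat_injective_deform_matrix_0:
  assumes inj: "inj_on (gr_mult l L ^^ d) (gr_grade A l i)"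
  shows "mat_injective (adapted_basis i) (adapted_basis (i + d)) (\<lambda>q p. poly (deform_matrix i d q p) 0)"
  unfolding mat_injective_def
proof (intro allI impI ballI)
  fix z p
  assume z: "\<forall>q\<in>adapted_basis (i + d). (\<Sum>p\<in>adapted_basis i. poly (deform_matrix i d q p) 0 * z p) = 0"
    and p: "p \<in> adapted_basis i"
  define r where "r = level_sum i z"
  have r: "r k \<in> pideal (l ^ k) \<and> r k \<in> A i" for k
    unfolding r_def using level_sum_in_pideal level_sum_in_piece by blast
  have "L_power_rep d r j \<in> pideal (l ^ Suc j)" for j
    unfolding r_def using z by (rule L_power_rep_level_sum_in_pideal_Suc)
  hence "gr_class (L_power_rep d r) = gr_class (\<lambda>_. 0)"
    by (simp add: fun_eq_iff gr_class_eq_iff)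
  hence "(gr_mult l L ^^ d) (gr_class r) = (gr_mult l L ^^ d) (gr_class (\<lambda>_. 0))"
    using r by (simp add: gr_mult_L_power_gr_class gr_mult_L_power_gr_class_0)
  moreover have "gr_class r \<in> gr_grade A l i" "gr_class (\<lambda>_. 0) \<in> gr_grade A l i"
    using r zero_in_piece by (auto intro: gr_class_in_gr_grade)
  ultimately have "gr_class r = gr_class (\<lambda>_. 0)" using inj by (blast dest: inj_onD)
  hence "gr_class r (l_order p) = gr_class (\<lambda>_. 0) (l_order p)" by simp
  hence "r (l_order p) \<in> pideal (l ^ Suc (l_order p))" by (simp only: gr_class_eq_iff diff_zero)
  hence "coord i (r (l_order p)) p = 0"
    using coord_eq_0_if_in_pideal[OF _ r[THEN conjunct2] p lessI] by blast
  thus "z p = 0" using coord_level_sum[OF p] by (simp add: r_def)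
qed

lemma mat_surjective_deform_matrix_0:
  assumes surj: "(gr_mult l L ^^ d) ` gr_grade A l i = gr_grade A l (i + d)"
  shows "mat_surjective (adapted_basis i) (adapted_basis (i + d)) (\<lambda>q p. poly (deform_matrix i d q p) 0)"
  unfolding mat_surjective_def
proof
  fix y
  define h where "h = level_sum (i + d) y"
  have h: "h k \<in> pideal (l ^ k) \<and> h k \<in> A (i + d)" for k
    unfolding h_def using level_sum_in_pideal level_sum_in_piece by blast
  have "gr_class h \<in> (gr_mult l L ^^ d) ` gr_grade A l i"
    unfolding surj using h by (rule gr_class_in_gr_grade)
  then obtain g where g: "g \<in> gr_grade A l i" "(gr_mult l L ^^ d) g = gr_class h"
    by (rule imageE) simp
  obtain r where r: "\<And>k. r k \<in> pideal (l ^ k) \<and> r k \<in> A i" and gr: "g = gr_class r"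
    using gr_grade_imp_ex_gr_class[OF g(1)] by blast
  have "(gr_mult l L ^^ d) (gr_class r) = gr_class (L_power_rep d r)"
    by (rule gr_mult_L_power_gr_class) (use r in blast)
  hence rep_eq: "gr_class (L_power_rep d r) = gr_class h" using g(2) unfolding gr by simp
  show "\<exists>z. \<forall>q\<in>adapted_basis (i + d). (\<Sum>p\<in>adapted_basis i. poly (deform_matrix i d q p) 0 * z p) = y q"
  proof (intro exI ballI)
    fix q assume q: "q \<in> adapted_basis (i + d)"
    define j where "j = l_order q"
    have rep_A: "L_power_rep d r j \<in> A (i + d)"
      by (rule L_power_rep_in_piece) (use r in blast)
    have h_A: "h j \<in> A (i + d)" using h by blast
    have "L_power_rep d r j - h j \<in> pideal (l ^ Suc j)"
      using fun_cong[OF rep_eq, of j] by (simp only: gr_class_eq_iff)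
    hence "coord (i + d) (L_power_rep d r j - h j) q = 0"
      by (rule coord_eq_0_if_in_pideal[OF _ diff_in_piece[OF rep_A h_A] q]) (simp add: j_def)
    moreover have "coord (i + d) (h j) q = y q"
      unfolding h_def j_def by (rule coord_level_sum[OF q])
    ultimately have "coord (i + d) (L_power_rep d r j) q = y q"
      by (simp add: coord_diff[OF rep_A h_A])
    thus "(\<Sum>p\<in>adapted_basis i. poly (deform_matrix i d q p) 0 * coord i (r (l_order p)) p) = y q"
      using coord_L_power_rep[OF r q] by (simp add: j_def)
  qed
qed

lemma inj_L_deform_power_if_mat_injective:
  assumes t: "t \<noteq> 0"
    and inj: "mat_injective (adapted_basis i) (adapted_basis (i + d)) (\<lambda>q p. poly (deform_matrix i d q p) t)"
  shows "inj_on ((*) (L_deform t ^ d)) (A i)"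
proof -
  have kernel: "v = 0" if v: "v \<in> A i" "L_deform t ^ d * v = 0" for v
  proof -
    define z where "z p = coord i v p * t ^ l_order p" for p
    have "(\<Sum>p\<in>adapted_basis i. poly (deform_matrix i d q p) t * z p) = 0"
      if q: "q \<in> adapted_basis (i + d)" for q
    proof -
      have "(\<Sum>p\<in>adapted_basis i. poly (deform_matrix i d q p) t * z p)
          = (\<Sum>p\<in>adapted_basis i. coord i v p * (coord (i + d) (L_deform t ^ d * p) q * t ^ l_order q))"
      proof (intro sum.cong refl)
        fix p assume p: "p \<in> adapted_basis i"
        show "poly (deform_matrix i d q p) t * z p
            = coord i v p * (coord (i + d) (L_deform t ^ d * p) q * t ^ l_order q)"
          unfolding coord_L_deform_power_mult[OF t p q] z_def by (simp only: ac_simps)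
      qed
      also have "\<dots> = coord (i + d) (L_deform t ^ d * v) q * t ^ l_order q"
        unfolding coord_mult[OF L_deform_power_in_piece v(1)] sum_distrib_right by (simp add: mult.assoc)
      finally show ?thesis using v(2) by (simp add: coord_zero)
    qed
    hence "\<forall>p\<in>adapted_basis i. z p = 0" using inj unfolding mat_injective_def by blast
    hence "coord i v p = coord i 0 p" if "p \<in> adapted_basis i" for p
      using that t by (simp add: z_def coord_zero)
    thus "v = 0" using coord_eqI[OF v(1) zero_in_piece] by blast
  qed
  show ?thesis
  proof (rule inj_onI)
    fix x y assume "x \<in> A i" "y \<in> A i" "L_deform t ^ d * x = L_deform t ^ d * y"
    hence "x - y = 0" using kernel[OF diff_in_piece] by (simp add: right_diff_distrib)
    thus "x = y" by simp
  qed
qed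

lemma L_deform_power_image_if_mat_surjective:
  assumes t: "t \<noteq> 0"
    and surj: "mat_surjective (adapted_basis i) (adapted_basis (i + d)) (\<lambda>q p. poly (deform_matrix i d q p) t)"
  shows "(*) (L_deform t ^ d) ` A i = A (i + d)"
proof
  show "(*) (L_deform t ^ d) ` A i \<subseteq> A (i + d)" using L_deform_power_mult_in_piece by blast
  show "A (i + d) \<subseteq> (*) (L_deform t ^ d) ` A i"
  proof
    fix w assume w: "w \<in> A (i + d)"
    obtain z where z: "\<forall>q\<in>adapted_basis (i + d).
        (\<Sum>p\<in>adapted_basis i. poly (deform_matrix i d q p) t * z p) = coord (i + d) w q * t ^ l_order q"
      using surj[unfolded mat_surjective_def, rule_format, of "\<lambda>q. coord (i + d) w q * t ^ l_order q"]
      by blast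
    define v where "v = (\<Sum>p\<in>adapted_basis i. scale (z p * inverse t ^ l_order p) p)"
    have v: "v \<in> A i" unfolding v_def by (rule sum_in_piece) (use adapted_basis(3) scale_in_piece in blast)
    have coord_v: "coord i v p = z p * inverse t ^ l_order p" if "p \<in> adapted_basis i" for p
      unfolding v_def using coord_basis_combination[of "adapted_basis i" i] that by simp
    have "L_deform t ^ d * v = w"
    proof (rule coord_eqI[OF L_deform_power_mult_in_piece[OF v] w])
      fix q assume q: "q \<in> adapted_basis (i + d)"
      have "coord (i + d) (L_deform t ^ d * v) q * t ^ l_order q
          = (\<Sum>p\<in>adapted_basis i. z p * inverse t ^ l_order p * (coord (i + d) (L_deform t ^ d * p) q * t ^ l_order q))"
        unfolding coord_mult[OF L_deform_power_in_piece v] sum_distrib_right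
        by (intro sum.cong refl) (simp add: coord_v mult.assoc)
      also have "\<dots> = (\<Sum>p\<in>adapted_basis i. poly (deform_matrix i d q p) t * z p)"
      proof (intro sum.cong refl)
        fix p assume p: "p \<in> adapted_basis i"
        have one: "inverse t ^ l_order p * t ^ l_order p = 1"
          using t by (simp add: power_mult_distrib[symmetric])
        have "z p * inverse t ^ l_order p * (t ^ l_order p * poly (deform_matrix i d q p) t)
            = (inverse t ^ l_order p * t ^ l_order p) * (poly (deform_matrix i d q p) t * z p)"
          by (simp only: ac_simps)
        also have "\<dots> = poly (deform_matrix i d q p) t * z p" unfolding one by simp
        finally show "z p * inverse t ^ l_order p * (coord (i + d) (L_deform t ^ d * p) q * t ^ l_order q)
            = poly (deform_matrix i d q p) t * z p"
          unfolding coord_L_deform_power_mult[OF t p q] .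
      qed
      also have "\<dots> = coord (i + d) w q * t ^ l_order q" using z q by blast
      finally show "coord (i + d) (L_deform t ^ d * v) q = coord (i + d) w q" using t by simp
    qed
    thus "w \<in> (*) (L_deform t ^ d) ` A i" using v by blast
  qed
qed

lemma maximal_rank_L_deform_power_generic:
  assumes "maximal_rank (gr_mult l L ^^ d) (gr_grade A l i) (gr_grade A l (i + d))"
  shows "\<exists>S. finite S \<and> (\<forall>t. t \<notin> S \<longrightarrow> maximal_rank ((*) (L_deform t ^ d)) (A i) (A (i + d)))"
proof (cases "inj_on (gr_mult l L ^^ d) (gr_grade A l i)")
  case True
  from poly_mat_generically_injective[OF adapted_basis(1) adapted_basis(1) mat_injective_deform_matrix_0[OF True]]
  obtain S where "finite S"
    "\<forall>t. t \<notin> S \<longrightarrow> mat_injective (adapted_basis i) (adapted_basis (i + d)) (\<lambda>q p. poly (deform_matrix i d q p) t)"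
    by blast
  thus ?thesis using inj_L_deform_power_if_mat_injective
    by (intro exI[of _ "insert 0 S"]) (simp add: maximal_rank_def)
next
  case False
  hence "(gr_mult l L ^^ d) ` gr_grade A l i = gr_grade A l (i + d)"
    using assms unfolding maximal_rank_def by blast
  from poly_mat_generically_surjective[OF adapted_basis(1) adapted_basis(1) mat_surjective_deform_matrix_0[OF this]]
  obtain S where "finite S"
    "\<forall>t. t \<notin> S \<longrightarrow> mat_surjective (adapted_basis i) (adapted_basis (i + d)) (\<lambda>q p. poly (deform_matrix i d q p) t)"
    by blast
  thus ?thesis using L_deform_power_image_if_mat_surjective
    by (intro exI[of _ "insert 0 S"]) (simp add: maximal_rank_def)
qed

lemma ex_L_deform_maximal_rank:
  assumes inf: "infinite (UNIV :: 'k set)"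
    and mr: "\<forall>d\<in>D. \<forall>i. maximal_rank (gr_mult l L ^^ d) (gr_grade A l i) (gr_grade A l (i + d))"
  shows "\<exists>t. \<forall>d\<in>D. \<forall>i. maximal_rank ((*) (L_deform t) ^^ d) (A i) (A (i + d))"
proof -
  obtain N where N: "\<forall>n\<ge>N. A n = {0}" using pieces_eventually_zero by blast
  define I where "I = {..<N} \<times> (D \<inter> {..<N})"
  define good where "good x S \<longleftrightarrow> finite S \<and>
      (\<forall>t. t \<notin> S \<longrightarrow> maximal_rank ((*) (L_deform t ^ snd x)) (A (fst x)) (A (fst x + snd x)))"
    for x S
  define S where "S x = (SOME S. good x S)" for x
  have S: "good x (S x)" if "x \<in> I" for x
  proof -
    have "\<exists>S. good x S" unfolding good_def
      by (rule maximal_rank_L_deform_power_generic) (use mr that in \<open>auto simp: I_def\<close>)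
    thus ?thesis unfolding S_def by (rule someI_ex)
  qed
  have "finite (S x)" if "x \<in> I" for x using S[OF that] unfolding good_def by blast
  moreover have "finite I" unfolding I_def by simp
  ultimately have "finite (\<Union>x\<in>I. S x)" by simp
  then obtain t where t: "t \<notin> (\<Union>x\<in>I. S x)" using ex_new_if_finite[OF inf] by blast
  have "maximal_rank ((*) (L_deform t ^ d)) (A i) (A (i + d))" if "d \<in> D" for d i
  proof (cases "(i, d) \<in> I")
    case True
    hence "t \<notin> S (i, d)" using t by blast
    thus ?thesis using S[OF True] unfolding good_def by simp
  next
    case False
    hence "A i = {0} \<or> A (i + d) = {0}" using N that unfolding I_def by auto
    thus ?thesis by (rule maximal_rank_mult_if_piece_zero[OF L_deform_power_in_piece])
  qed
  thus ?thesis by (auto simp: times_funpow)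
qed

end

section \<open>Lefschetz properties of A and of Gr_l(A)\<close>

context std_graded_artinian
begin

text \<open>For l = 0 only the component (l^0)/(l^1) = A of Gr_l(A) is nonzero.\<close>

definition gr0_of :: "'a \<Rightarrow> nat \<Rightarrow> 'a set" where
  "gr0_of x = (\<lambda>j. if j = 0 then {x} else {0})"

lemma inj_gr0_of: "inj gr0_of"
  by (rule injI) (metis gr0_of_def singleton_inject)

lemma gr_grade_0: "gr_grade A 0 d = gr0_of ` A d"
proof -
  have piece: "gr_piece A 0 j d = (if j = 0 then {{x} | x. x \<in> A d} else {{0}})" for j
    using zero_in_piece[of d] by (auto simp: gr_piece_def coset_def power_0_left)
  show ?thesis
  proof
    show "gr_grade A 0 d \<subseteq> gr0_of ` A d"
    proof
      fix g assume "g \<in> gr_grade A 0 d"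
      hence g: "g j \<in> gr_piece A 0 j d" for j unfolding gr_grade_def by blast
      from g[of 0] obtain x where x: "x \<in> A d" "g 0 = {x}" unfolding piece by auto
      have "g = gr0_of x"
      proof
        fix j show "g j = gr0_of x j"
          using g[of j] x unfolding piece gr0_of_def by (cases "j = 0") simp_all
      qed
      thus "g \<in> gr0_of ` A d" using x by blast
    qed
    show "gr0_of ` A d \<subseteq> gr_grade A 0 d"
      unfolding gr_grade_def piece gr0_of_def by auto
  qed
qed

lemma gr_mult_0_gr0_of: "gr_mult 0 (gr0_of a) (gr0_of b) = gr0_of (a * b)"
proof
  fix j
  have rep: "gr_rep (gr0_of x k) = (if k = 0 then x else 0)" for x k
    by (simp add: gr0_of_def gr_rep_def)
  have "(\<Sum>a'\<le>j. gr_rep (gr0_of a a') * gr_rep (gr0_of b (j - a'))) = (if j = 0 then a * b else 0)"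
    unfolding rep by (induction j) auto
  moreover have "coset (pideal (0 ^ Suc j)) x = {x}" for x :: 'a
    by (simp add: coset_def)
  ultimately show "gr_mult 0 (gr0_of a) (gr0_of b) j = gr0_of (a * b) j"
    by (simp add: gr_mult_def gr0_of_def)
qed

lemma maximal_rank_gr_0:
  assumes "maximal_rank ((*) a ^^ d) (A i) (A j)"
  shows "maximal_rank (gr_mult 0 (gr0_of a) ^^ d) (gr_grade A 0 i) (gr_grade A 0 j)"
proof -
  have "(gr_mult 0 (gr0_of a) ^^ d) (gr0_of x) = gr0_of (((*) a ^^ d) x)" for x
    by (rule funpow_conj) (rule gr_mult_0_gr0_of)
  thus ?thesis unfolding gr_grade_0 by (rule maximal_rank_image[OF inj_gr0_of _ assms])
qed

lemma gr_0_WLP_if_WLP: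
  assumes "WLP A (*)"
  shows "WLP (gr_grade A 0) (gr_mult 0)"
proof -
  obtain a where a: "a \<in> A 1" "\<forall>i. maximal_rank ((*) a) (A i) (A (Suc i))"
    using assms unfolding WLP_def by blast
  have "maximal_rank (gr_mult 0 (gr0_of a)) (gr_grade A 0 i) (gr_grade A 0 (Suc i))" for i
    using maximal_rank_gr_0[where d = 1 and j = "Suc i"] a(2) by simp
  moreover have "gr0_of a \<in> gr_grade A 0 1" unfolding gr_grade_0 using a(1) by blast
  ultimately show ?thesis unfolding WLP_def by blast
qed

lemma gr_0_SLP_if_SLP:
  assumes "SLP A (*)"
  shows "SLP (gr_grade A 0) (gr_mult 0)"
proof -
  obtain a where a: "a \<in> A 1" "\<forall>d>0. \<forall>i. maximal_rank ((*) a ^^ d) (A i) (A (i + d))"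
    using assms unfolding SLP_def by blast
  have "maximal_rank (gr_mult 0 (gr0_of a) ^^ d) (gr_grade A 0 i) (gr_grade A 0 (i + d))" if "d > 0" for d i
    using maximal_rank_gr_0 a(2) that by blast
  moreover have "gr0_of a \<in> gr_grade A 0 1" unfolding gr_grade_0 using a(1) by blast
  ultimately show ?thesis unfolding SLP_def by blast
qed

lemma lefschetz_element_if_gr:
  assumes "infinite (UNIV :: 'k set)" and l: "l \<in> A 1" and L: "L \<in> gr_grade A l 1"
    and "\<forall>d\<in>D. \<forall>i. maximal_rank (gr_mult l L ^^ d) (gr_grade A l i) (gr_grade A l (i + d))"
  shows "\<exists>u\<in>A 1. \<forall>d\<in>D. \<forall>i. maximal_rank ((*) u ^^ d) (A i) (A (i + d))"
proof -
  interpret gr_linear_form scale A l L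
    by unfold_locales (fact l L)+
  show ?thesis using ex_L_deform_maximal_rank[OF assms(1,4)] L_deform_in_piece_1 by blast
qed

lemma WLP_if_gr_WLP:
  assumes "infinite (UNIV :: 'k set)" "l \<in> A 1" "WLP (gr_grade A l) (gr_mult l)"
  shows "WLP A (*)"
proof -
  obtain L where "L \<in> gr_grade A l 1" "\<forall>d\<in>{1}. \<forall>i. maximal_rank (gr_mult l L ^^ d) (gr_grade A l i) (gr_grade A l (i + d))"
    using assms(3) unfolding WLP_def by auto
  from lefschetz_element_if_gr[OF assms(1,2) this] show ?thesis unfolding WLP_def by auto
qed

lemma SLP_if_gr_SLP:
  assumes "infinite (UNIV :: 'k set)" "l \<in> A 1" "SLP (gr_grade A l) (gr_mult l)"
  shows "SLP A (*)"
proof -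
  obtain L where "L \<in> gr_grade A l 1" "\<forall>d\<in>{d. d > 0}. \<forall>i. maximal_rank (gr_mult l L ^^ d) (gr_grade A l i) (gr_grade A l (i + d))"
    using assms(3) unfolding SLP_def by auto
  from lefschetz_element_if_gr[OF assms(1,2) this] show ?thesis unfolding SLP_def by auto
qed

end

theorem theorem2p12:
  fixes scale :: "'k::field_char_0 \<Rightarrow> 'a::comm_ring_1 \<Rightarrow> 'a"
    and A :: "nat \<Rightarrow> 'a set"
  assumes "standard_graded_artinian_algebra scale A"
  shows "(WLP A (*) \<longleftrightarrow> (\<exists>l\<in>A 1. WLP (gr_grade A l) (gr_mult l)))
       \<and> (SLP A (*) \<longleftrightarrow> (\<exists>l\<in>A 1. SLP (gr_grade A l) (gr_mult l)))"
proof -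
  interpret std_graded_artinian scale A by (rule std_graded_artinian.intro) (rule assms)
  have inf: "infinite (UNIV :: 'k set)" by (rule infinite_UNIV_char_0)
  have zero: "0 \<in> A 1" by (rule zero_in_piece)
  show ?thesis
  proof (intro conjI iffI)
    show "\<exists>l\<in>A 1. WLP (gr_grade A l) (gr_mult l)" if "WLP A (*)"
      using zero gr_0_WLP_if_WLP[OF that] by blast
    show "WLP A (*)" if "\<exists>l\<in>A 1. WLP (gr_grade A l) (gr_mult l)"
      using that WLP_if_gr_WLP[OF inf] by blast
    show "\<exists>l\<in>A 1. SLP (gr_grade A l) (gr_mult l)" if "SLP A (*)"
      using zero gr_0_SLP_if_SLP[OF that] by blast
    show "SLP A (*)" if "\<exists>l\<in>A 1. SLP (gr_grade A l) (gr_mult l)"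
      using that SLP_if_gr_SLP[OF inf] by blast
  qed
qed

end
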